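(* Let $f$ be a nonconstant meromorphic function on $\mathbb{C}$. Suppose the phase of $f$ is doubly periodic with primitive periods $p_1,p_2$, where $\omega=\frac{p_2}{p_1}\in\mathbb{C}\setminus\mathbb{R}$. Let $L=\mathbb{Z}p_1+\mathbb{Z}p_2$ and let $$\sigma(z)=z\prod_{\lambda\in L\setminus\{0\}}e^{\frac{z}{\lambda}+\frac{z^2}{2\lambda^2}}\left(1-\frac{z}{\lambda}\right)$$ be the Weierstrass sigma-function of $L$. Then there exist an elliptic function $g$ with periods $p_1,p_2$, a number $\xi_0\in\mathbb{C}$, a number $a\in\mathbb{C}$ and integers $m_1,m_2\in\mathbb{Z}$ such that $$f(z)=e^{az}g(z)\frac{\sigma(z)}{\sigma(-\xi_0+z)}$$ and $$\operatorname{Im}(ap_j)=\operatorname{Im}(v_j)+2m_j\pi,\qquad j\in\{1,2\},$$ where $$v_j=-\frac{3\xi_0}{p_j}+\xi_0p_j^2\sum_{\lambda\in L\setminus\{0,-p_j\}}\frac{1}{\lambda(\lambda+p_j)^2}.$$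
   Context: For a function $f$ defined on an open set $D\subset\mathbb{C}$ with values in $\widehat{\mathbb{C}}$, its phase is the function $z\mapsto \frac{f(z)}{|f(z)|}$, defined on $\{z\in D: f(z)\in\widehat{\mathbb{C}}\setminus\{0,\infty\}\}$ with values in the unit circle $\mathbb{T}$. A number $p$ is a period of the phase if $\frac{f(z+p)}{|f(z+p)|}=\frac{f(z)}{|f(z)|}$ whenever both sides are defined; the phase is doubly periodic with primitive periods $p_1,p_2$ if $p_1,p_2$ (linearly independent over $\mathbb{R}$) generate its group of periods. An elliptic function with periods $p_1,p_2$ is a meromorphic function on $\mathbb{C}$ invariant under $z\mapsto z+p_1$ and $z\mapsto z+p_2$. *)

theory Defs
  imports "HOL-Complex_Analysis.Complex_Analysis"
begin

text \<open>A meromorphic function on C with values in the extended plane is represented by a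
  nicely meromorphic function: at a pole z the value is infinity (encoded by is_pole f z),
  elsewhere f is continuous with value f z.\<close>

definition phase_domain :: "(complex \<Rightarrow> complex) \<Rightarrow> complex set" where
  "phase_domain f = {z. \<not> is_pole f z \<and> f z \<noteq> 0}"

definition phase :: "(complex \<Rightarrow> complex) \<Rightarrow> complex \<Rightarrow> complex" where
  "phase f z = f z / complex_of_real (norm (f z))"

definition is_phase_period :: "(complex \<Rightarrow> complex) \<Rightarrow> complex \<Rightarrow> bool" where
  "is_phase_period f p \<longleftrightarrow>
     (\<forall>z. z \<in> phase_domain f \<and> z + p \<in> phase_domain f \<longrightarrow> phase f (z + p) = phase f z)"

definition lattice :: "complex \<Rightarrow> complex \<Rightarrow> complex set" where
  "lattice p1 p2 = {of_int m * p1 + of_int n * p2 | m n. True}"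

text \<open>Phase doubly periodic with primitive periods p1, p2: p1, p2 are R-linearly
  independent and generate the group of all periods of the phase.\<close>
definition phase_doubly_periodic :: "(complex \<Rightarrow> complex) \<Rightarrow> complex \<Rightarrow> complex \<Rightarrow> bool" where
  "phase_doubly_periodic f p1 p2 \<longleftrightarrow>
     p2 / p1 \<notin> \<real> \<and> {p. is_phase_period f p} = lattice p1 p2"

definition elliptic :: "(complex \<Rightarrow> complex) \<Rightarrow> complex \<Rightarrow> complex \<Rightarrow> bool" where
  "elliptic g p1 p2 \<longleftrightarrow> g meromorphic_on UNIV \<and>
     (\<forall>z. g (z + p1) = g z) \<and> (\<forall>z. g (z + p2) = g z)"

text \<open>Weierstrass sigma function; the (absolutely convergent) product over L - {0} is
  taken as the limit of finite partial products along the net of finite subsets.\<close>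
definition weierstrass_sigma :: "complex set \<Rightarrow> complex \<Rightarrow> complex" where
  "weierstrass_sigma L z = z * Lim (finite_subsets_at_top (L - {0}))
     (\<lambda>F. \<Prod>l\<in>F. exp (z / l + z\<^sup>2 / (2 * l\<^sup>2)) * (1 - z / l))"

definition v_term :: "complex set \<Rightarrow> complex \<Rightarrow> complex \<Rightarrow> complex" where
  "v_term L \<xi>0 p = - 3 * \<xi>0 / p +
     \<xi>0 * p\<^sup>2 * (\<Sum>\<^sub>\<infinity>l\<in>L - {0, - p}. 1 / (l * (l + p)\<^sup>2))"

end

(*
  If p is a period of the phase of f, then f (z + p) / f z is holomorphic and real-valued near any
  point where f and f (- + p) are regular and nonzero, hence a positive constant by the open mapping
  theorem; by uniqueness of meromorphic continuation, f (z + p) = c f z everywhere.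

  The sigma function is quasi-periodic, sigma (z + p) = K exp (eta p * z) sigma z, because its
  logarithmic derivative zeta satisfies zeta (z + p) - zeta z = eta p = 3 / p - p^2 * S, where S is
  the sum of 1 / (l (l + p)^2) over L - {0, - p}; the remaining part of the difference, the sum of
  1 / l^2 - 1 / (l + p)^2, vanishes by the symmetry l |-> - l - p. Legendre's relation holds in the
  weak form p1 * eta p2 \<noteq> p2 * eta p1: otherwise sigma z * exp (- kappa z^2 / 2) would be an odd entire
  function of lattice-periodic modulus, hence bounded and constant, although it vanishes at 0 and
  not everywhere.

  So the linear system a p_j + eta p_j * xi0 = ln c_j is solvable, which makes
  g z = f z * exp (- a z) * sigma (z - xi0) / sigma z elliptic; moreover v_j = - xi0 * eta p_j,
  so the imaginary parts match with m_j = 0.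
*)

theory Submission
  imports Defs
begin

section \<open>Lattices\<close>

lemma lattice_iff: "x \<in> lattice p1 p2 \<longleftrightarrow> (\<exists>m n. x = of_int m * p1 + of_int n * p2)"
  by (auto simp: lattice_def)

locale complex_lattice =
  fixes p1 p2 :: complex
  assumes ratio_not_real: "p2 / p1 \<notin> \<real>"
begin

abbreviation "L \<equiv> lattice p1 p2"

lemma p1_nonzero: "p1 \<noteq> 0"
  using ratio_not_real by (metis Reals_0 division_ring_divide_zero)

lemma zero_in_lattice [simp]: "0 \<in> L"
  unfolding lattice_iff by (rule exI[of _ 0], rule exI[of _ 0]) simp

lemma p1_in_lattice [simp]: "p1 \<in> L"
  unfolding lattice_iff by (rule exI[of _ 1], rule exI[of _ 0]) simp

lemma p2_in_lattice [simp]: "p2 \<in> L"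
  unfolding lattice_iff by (rule exI[of _ 0], rule exI[of _ 1]) simp

lemma add_in_lattice: "x \<in> L \<Longrightarrow> y \<in> L \<Longrightarrow> x + y \<in> L"
proof -
  assume "x \<in> L" "y \<in> L"
  then obtain m n m' n' where "x = of_int m * p1 + of_int n * p2" "y = of_int m' * p1 + of_int n' * p2"
    by (auto simp: lattice_iff)
  hence "x + y = of_int (m + m') * p1 + of_int (n + n') * p2" by (simp add: algebra_simps)
  thus ?thesis unfolding lattice_iff by blast
qed

lemma minus_in_lattice_iff [simp]: "- x \<in> L \<longleftrightarrow> x \<in> L"
proof -
  have "- x \<in> L" if "x \<in> L" for x
  proof -
    obtain m n where "x = of_int m * p1 + of_int n * p2" using \<open>x \<in> L\<close> by (auto simp: lattice_iff)
    hence "- x = of_int (- m) * p1 + of_int (- n) * p2" by (simp add: algebra_simps)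
    thus ?thesis unfolding lattice_iff by blast
  qed
  from this[of x] this[of "- x"] show ?thesis by auto
qed

lemma diff_in_lattice: "x \<in> L \<Longrightarrow> y \<in> L \<Longrightarrow> x - y \<in> L"
  using add_in_lattice[of x "- y"] by simp

lemma add_in_lattice_iff: "p \<in> L \<Longrightarrow> x + p \<in> L \<longleftrightarrow> x \<in> L"
  using add_in_lattice diff_in_lattice by fastforce

lemma real_coordinates_exist: "\<exists>s t. z = of_real s * p1 + of_real t * p2"
proof -
  define q where "q = p2 / p1"
  have q: "Im q \<noteq> 0" using ratio_not_real complex_is_Real_iff q_def by blast
  define t where "t = Im (z / p1) / Im q"
  define s where "s = Re (z / p1) - t * Re q"
  have "of_real s + of_real t * q = z / p1"
    using q by (simp add: complex_eq_iff s_def t_def)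
  hence "(of_real s + of_real t * q) * p1 = z" using p1_nonzero by simp
  hence "z = of_real s * p1 + of_real t * p2" using p1_nonzero by (simp add: q_def algebra_simps)
  thus ?thesis by blast
qed

lemma norm_real_coordinates_lower_bound:
  obtains c where "c > 0" "\<And>s t. c * (\<bar>s\<bar> + \<bar>t\<bar>) \<le> norm (of_real s * p1 + of_real t * p2)"
proof -
  define q where "q = p2 / p1"
  have b: "\<bar>Im q\<bar> > 0" using ratio_not_real complex_is_Real_iff q_def by auto
  define D where "D = 1 + (\<bar>Re q\<bar> + 1) / \<bar>Im q\<bar>"
  have D: "D > 0" unfolding D_def using b by (intro add_pos_nonneg) auto
  have "norm p1 / D * (\<bar>s\<bar> + \<bar>t\<bar>) \<le> norm (of_real s * p1 + of_real t * p2)" for s t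
  proof -
    define w where "w = of_real s + of_real t * q"
    have "\<bar>t\<bar> * \<bar>Im q\<bar> \<le> norm w"
      using abs_Im_le_cmod[of w] by (simp add: w_def abs_mult)
    hence t: "\<bar>t\<bar> \<le> norm w / \<bar>Im q\<bar>" using b by (simp add: field_simps)
    have "\<bar>s + t * Re q\<bar> \<le> norm w"
      using abs_Re_le_cmod[of w] by (simp add: w_def)
    moreover have "\<bar>s\<bar> \<le> \<bar>s + t * Re q\<bar> + \<bar>t * Re q\<bar>"
      using abs_triangle_ineq4[of "s + t * Re q" "t * Re q"] by simp
    ultimately have "\<bar>s\<bar> + \<bar>t\<bar> \<le> norm w + \<bar>t\<bar> * (\<bar>Re q\<bar> + 1)"
      by (simp add: abs_mult algebra_simps)
    also have "\<dots> \<le> norm w + norm w / \<bar>Im q\<bar> * (\<bar>Re q\<bar> + 1)"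
      using t by (intro add_left_mono mult_right_mono) auto
    also have "\<dots> = norm w * D" using b by (simp add: D_def field_simps)
    finally have "norm p1 / D * (\<bar>s\<bar> + \<bar>t\<bar>) \<le> norm p1 / D * (norm w * D)"
      using D by (intro mult_left_mono) auto
    also have "\<dots> = norm (w * p1)" using D by (simp add: norm_mult)
    also have "w * p1 = of_real s * p1 + of_real t * p2"
      using p1_nonzero by (simp add: w_def q_def field_simps)
    finally show ?thesis .
  qed
  moreover have "norm p1 / D > 0" using D p1_nonzero by simp
  ultimately show ?thesis using that by blast
qed

lemma real_coordinates_eq_0_iff: "of_real s * p1 + of_real t * p2 = 0 \<longleftrightarrow> s = 0 \<and> t = 0"
proof
  assume "of_real s * p1 + of_real t * p2 = 0"
  moreover obtain c where "c > 0" "c * (\<bar>s\<bar> + \<bar>t\<bar>) \<le> norm (of_real s * p1 + of_real t * p2)"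
    using norm_real_coordinates_lower_bound by metis
  ultimately have "c * (\<bar>s\<bar> + \<bar>t\<bar>) \<le> 0" by simp
  with \<open>c > 0\<close> have "\<bar>s\<bar> + \<bar>t\<bar> \<le> 0" by (simp add: mult_le_0_iff)
  thus "s = 0 \<and> t = 0" by linarith
qed simp

abbreviation "lattice_point \<equiv> \<lambda>(m::int, n::int). of_int m * p1 + of_int n * p2"

lemma inj_lattice_point: "inj lattice_point"
proof (rule injI, clarify)
  fix m n m' n' :: int
  assume "of_int m * p1 + of_int n * p2 = of_int m' * p1 + of_int n' * p2"
  hence "of_real (of_int (m - m')) * p1 + of_real (of_int (n - n')) * p2 = 0"
    by (simp add: algebra_simps)
  thus "m = m' \<and> n = n'" by (simp only: real_coordinates_eq_0_iff) simp
qed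

lemma lattice_eq_range: "L = range lattice_point"
  by (force simp: lattice_iff image_iff)

lemma lattice_minus_zero_eq_image: "L - {0} = lattice_point ` (UNIV - {(0, 0)})"
  by (simp add: lattice_eq_range image_set_diff[OF inj_lattice_point])

lemma finite_lattice_points_in_cball: "finite {x \<in> L. norm x \<le> R}"
proof -
  obtain c where c: "c > 0" "\<And>s t. c * (\<bar>s\<bar> + \<bar>t\<bar>) \<le> norm (of_real s * p1 + of_real t * p2)"
    using norm_real_coordinates_lower_bound by metis
  define N where "N = \<lceil>R / c\<rceil>"
  have "{x \<in> L. norm x \<le> R} \<subseteq> lattice_point ` ({-N..N} \<times> {-N..N})"
  proof
    fix x assume x: "x \<in> {x \<in> L. norm x \<le> R}"
    then obtain m n where mn: "x = of_int m * p1 + of_int n * p2" by (auto simp: lattice_iff)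
    have "c * (\<bar>m\<bar> + \<bar>n\<bar>) \<le> R" using c(2)[of m n] x mn by simp
    hence "\<bar>m\<bar> + \<bar>n\<bar> \<le> R / c" using c(1) by (simp add: field_simps)
    hence "\<bar>m\<bar> + \<bar>n\<bar> \<le> N" unfolding N_def by linarith
    thus "x \<in> lattice_point ` ({-N..N} \<times> {-N..N})"
      using mn by (intro image_eqI[of _ _ "(m, n)"]) auto
  qed
  thus ?thesis by (rule finite_subset) auto
qed

end

section \<open>Sums over a lattice\<close>

lemma summable_on_int_powr:
  assumes a: "a > 1"
  shows "(\<lambda>k::int. (1 + \<bar>real_of_int k\<bar>) powr - a) summable_on UNIV"
proof -
  define f where "f = (\<lambda>k::int. (1 + \<bar>real_of_int k\<bar>) powr - a)"
  have "summable (\<lambda>n. real (Suc n) powr - a)"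
    using summable_real_powr_iff[of "- a"] summable_Suc_iff[of "\<lambda>n. real n powr - a"] a by simp
  hence nat: "(\<lambda>n. real (Suc n) powr - a) summable_on UNIV"
    by (subst summable_on_UNIV_nonneg_real_iff) auto
  have "f summable_on range int"
    using nat by (subst summable_on_reindex) (auto simp: f_def o_def add.commute)
  moreover have "f summable_on range (\<lambda>n. - int n)"
    using nat by (subst summable_on_reindex) (auto simp: f_def o_def add.commute inj_on_def)
  ultimately have "f summable_on (range int \<union> range (\<lambda>n. - int n))"
    by (rule summable_on_union)
  moreover have "range int \<union> range (\<lambda>n. - int n) = UNIV"
  proof -
    have "k \<in> range int \<union> range (\<lambda>n. - int n)" for k :: int
      by (cases "k \<ge> 0") (auto intro: image_eqI[of _ _ "nat k"] image_eqI[of _ _ "nat (- k)"])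
    thus ?thesis by blast
  qed
  ultimately show ?thesis by (simp add: f_def)
qed

lemma inverse_cube_le_powr_product:
  fixes x y s :: real
  assumes "1 \<le> x" "1 \<le> y" "x \<le> 2 * s" "y \<le> 2 * s"
  shows "1 / s ^ 3 \<le> 8 * (x powr - (3/2) * y powr - (3/2))"
proof -
  have s: "2 * s > 0" using assms by simp
  have "(2 * s) powr - (3/2) \<le> x powr - (3/2)"
    by (rule powr_mono2') (use assms in auto)
  moreover have "(2 * s) powr - (3/2) \<le> y powr - (3/2)"
    by (rule powr_mono2') (use assms in auto)
  ultimately have "(2 * s) powr - (3/2) * (2 * s) powr - (3/2) \<le> x powr - (3/2) * y powr - (3/2)"
    by (rule mult_mono) auto
  also have "(2 * s) powr - (3/2) * (2 * s) powr - (3/2) = (2 * s) powr (- 3)"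
    by (subst powr_add[symmetric]) simp
  also have "\<dots> = inverse ((2 * s) ^ 3)"
    using s by (simp add: powr_minus powr_realpow)
  finally have "inverse ((2 * s) ^ 3) \<le> x powr - (3/2) * y powr - (3/2)" .
  moreover have "1 / s ^ 3 = 8 * inverse ((2 * s) ^ 3)"
    by (simp add: power_mult_distrib inverse_eq_divide)
  ultimately show ?thesis by simp
qed

context complex_lattice
begin

lemma summable_on_lattice_inverse_cube: "(\<lambda>x. 1 / norm x ^ 3) summable_on (L - {0})"
proof -
  obtain c where c: "c > 0" "\<And>s t. c * (\<bar>s\<bar> + \<bar>t\<bar>) \<le> norm (of_real s * p1 + of_real t * p2)"
    using norm_real_coordinates_lower_bound by metis
  define g where "g = (\<lambda>k::int. (1 + \<bar>real_of_int k\<bar>) powr - (3/2))"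
  have g: "g summable_on UNIV" unfolding g_def by (rule summable_on_int_powr) simp
  have prod: "(\<lambda>(m, n). g m * g n) summable_on (UNIV \<times> UNIV)"
  proof (rule summable_on_SigmaI)
    show "((\<lambda>n. case (m, n) of (m, n) \<Rightarrow> g m * g n) has_sum g m * infsum g UNIV) UNIV" for m
      using has_sum_cmult_right[OF has_sum_infsum[OF g], of "g m"] by simp
    show "(\<lambda>m. g m * infsum g UNIV) summable_on UNIV"
      using summable_on_cmult_left[OF g] .
  qed (auto simp: g_def)
  have "(\<lambda>(m, n). 8 / c ^ 3 * (g m * g n)) summable_on (UNIV - {(0, 0)})"
    using summable_on_subset[OF summable_on_cmult_right[OF prod, of "8 / c ^ 3"]]
    by (simp add: case_prod_unfold)
  hence "((\<lambda>x. 1 / norm x ^ 3) \<circ> lattice_point) summable_on (UNIV - {(0, 0)})"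
  proof (rule summable_on_comparison_test)
    fix mn :: "int \<times> int" assume mn: "mn \<in> UNIV - {(0, 0)}"
    obtain m n where mn_eq: "mn = (m, n)" by (cases mn)
    define s where "s = real_of_int (\<bar>m\<bar> + \<bar>n\<bar>)"
    have s: "s \<ge> 1" using mn mn_eq unfolding s_def by auto
    have "c * s \<le> norm (lattice_point mn)" using c(2)[of m n] unfolding mn_eq s_def by simp
    moreover have "c * s > 0" using c(1) s by simp
    ultimately have "1 / norm (lattice_point mn) ^ 3 \<le> 1 / (c * s) ^ 3"
      by (intro frac_le power_mono) auto
    also have "\<dots> = 1 / c ^ 3 * (1 / s ^ 3)" by (simp add: power_mult_distrib)
    also have "\<dots> \<le> 1 / c ^ 3 * (8 * (g m * g n))"
      unfolding g_def using c(1) s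
      by (intro mult_left_mono inverse_cube_le_powr_product) (auto simp: s_def)
    finally show "((\<lambda>x. 1 / norm x ^ 3) \<circ> lattice_point) mn \<le> (case mn of (m, n) \<Rightarrow> 8 / c ^ 3 * (g m * g n))"
      by (simp add: mn_eq)
  qed auto
  thus ?thesis
    unfolding lattice_minus_zero_eq_image
    by (subst summable_on_reindex) (use inj_lattice_point in \<open>auto intro: inj_on_subset\<close>)
qed

lemma summable_on_lattice_cubic_decay:
  fixes f :: "complex \<Rightarrow> 'a :: banach"
  assumes A: "A \<subseteq> L" and R: "R > 0"
      and decay: "\<And>x. x \<in> A \<Longrightarrow> norm x \<ge> R \<Longrightarrow> norm (f x) \<le> C / norm x ^ 3"
  shows "f summable_on A"
proof (rule abs_summable_summable)
  have "finite {x \<in> A. norm x < R}"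
    by (rule finite_subset[OF _ finite_lattice_points_in_cball[of R]]) (use A in auto)
  moreover have "(\<lambda>x. C * (1 / norm x ^ 3)) summable_on {x \<in> A. norm x \<ge> R}"
    by (rule summable_on_subset[OF summable_on_cmult_right[OF summable_on_lattice_inverse_cube]])
       (use A R in auto)
  hence "(\<lambda>x. norm (f x)) summable_on {x \<in> A. norm x \<ge> R}"
    by (rule summable_on_comparison_test) (use decay in auto)
  ultimately have "(\<lambda>x. norm (f x)) summable_on ({x \<in> A. norm x < R} \<union> {x \<in> A. norm x \<ge> R})"
    by (intro summable_on_union[OF summable_on_finite])
  also have "{x \<in> A. norm x < R} \<union> {x \<in> A. norm x \<ge> R} = A" by auto
  finally show "(\<lambda>x. norm (f x)) summable_on A" .
qed

end

section \<open>Products over finite subsets\<close>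

lemma uniform_limit_finite_subsets_Lim:
  fixes P :: "'i set \<Rightarrow> 'x \<Rightarrow> 'a :: banach"
  assumes cauchy: "\<And>e. e > 0 \<Longrightarrow> \<exists>F0. finite F0 \<and> F0 \<subseteq> I \<and>
             (\<forall>F x. finite F \<and> F0 \<subseteq> F \<and> F \<subseteq> I \<and> x \<in> K \<longrightarrow> dist (P F x) (P F0 x) \<le> e)"
  shows "uniform_limit K P (\<lambda>x. Lim (finite_subsets_at_top I) (\<lambda>F. P F x)) (finite_subsets_at_top I)"
proof (rule uniform_limitI)
  have lim: "((\<lambda>F. P F x) \<longlongrightarrow> Lim (finite_subsets_at_top I) (\<lambda>F. P F x)) (finite_subsets_at_top I)"
    if x: "x \<in> K" for x
  proof -
    have "cauchy_filter (filtermap (\<lambda>F. P F x) (finite_subsets_at_top I))"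
    proof (subst cauchy_filter_metric_filtermap, intro allI impI)
      fix e :: real assume e: "e > 0"
      then obtain F0 where F0: "finite F0" "F0 \<subseteq> I"
          "\<And>F. finite F \<Longrightarrow> F0 \<subseteq> F \<Longrightarrow> F \<subseteq> I \<Longrightarrow> dist (P F x) (P F0 x) \<le> e / 3"
        using cauchy[of "e / 3"] x by auto
      show "\<exists>Q. eventually Q (finite_subsets_at_top I) \<and>
                (\<forall>F G. Q F \<and> Q G \<longrightarrow> dist (P F x) (P G x) < e)"
      proof (intro exI conjI allI impI)
        show "eventually (\<lambda>F. finite F \<and> F0 \<subseteq> F \<and> F \<subseteq> I) (finite_subsets_at_top I)"
          unfolding eventually_finite_subsets_at_top using F0 by blast
      next
        fix F G assume "(finite F \<and> F0 \<subseteq> F \<and> F \<subseteq> I) \<and> finite G \<and> F0 \<subseteq> G \<and> G \<subseteq> I"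
        hence "dist (P F x) (P G x) \<le> e / 3 + e / 3"
          using dist_triangle2[of "P F x" "P G x" "P F0 x"] F0(3)[of F] F0(3)[of G] by linarith
        thus "dist (P F x) (P G x) < e" using e by linarith
      qed
    qed
    hence "convergent_filter (filtermap (\<lambda>F. P F x) (finite_subsets_at_top I))"
      by (rule cauchy_filter_convergent)
    then obtain c where c: "((\<lambda>F. P F x) \<longlongrightarrow> c) (finite_subsets_at_top I)"
      by (auto simp: convergent_filter_iff filterlim_def)
    moreover from c have "Lim (finite_subsets_at_top I) (\<lambda>F. P F x) = c"
      by (rule tendsto_Lim[rotated]) simp
    ultimately show ?thesis by simp
  qed
  fix e :: real assume e: "e > 0"
  then obtain F0 where F0: "finite F0" "F0 \<subseteq> I"
      "\<And>F x. finite F \<Longrightarrow> F0 \<subseteq> F \<Longrightarrow> F \<subseteq> I \<Longrightarrow> x \<in> K \<Longrightarrow> dist (P F x) (P F0 x) \<le> e / 4"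
    using cauchy[of "e / 4"] by auto
  show "\<forall>\<^sub>F F in finite_subsets_at_top I. \<forall>x\<in>K.
          dist (P F x) (Lim (finite_subsets_at_top I) (\<lambda>F. P F x)) < e"
    unfolding eventually_finite_subsets_at_top
  proof (rule exI[of _ F0], intro conjI allI impI ballI)
    fix F x assume F: "finite F \<and> F0 \<subseteq> F \<and> F \<subseteq> I" and x: "x \<in> K"
    define l where "l = Lim (finite_subsets_at_top I) (\<lambda>F. P F x)"
    have "((\<lambda>G. dist (P F0 x) (P G x)) \<longlongrightarrow> dist (P F0 x) l) (finite_subsets_at_top I)"
      unfolding l_def by (intro tendsto_intros lim x)
    moreover have "eventually (\<lambda>G. dist (P F0 x) (P G x) \<le> e / 4) (finite_subsets_at_top I)"
      unfolding eventually_finite_subsets_at_top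
      using F0 x by (intro exI[of _ F0]) (auto simp: dist_commute)
    ultimately have "dist (P F0 x) l \<le> e / 4"
      by (rule tendsto_upperbound) simp
    moreover have "dist (P F x) (P F0 x) \<le> e / 4" using F x F0(3) by blast
    ultimately have "dist (P F x) l \<le> e / 2"
      using dist_triangle[of "P F x" l "P F0 x"] by linarith
    thus "dist (P F x) l < e" using e by linarith
  qed (use F0 in auto)
qed

lemma norm_one_plus_le: "norm (1 + x) \<le> 1 + norm (x :: 'a :: real_normed_algebra_1)"
  using norm_triangle_ineq[of 1 x] by simp

lemma norm_prod_one_plus_minus_one_le:
  fixes u :: "'i \<Rightarrow> 'a :: {real_normed_div_algebra, comm_ring_1}"
  shows "norm ((\<Prod>i\<in>F. 1 + u i) - 1) \<le> (\<Prod>i\<in>F. 1 + norm (u i)) - 1"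
proof (induction F rule: infinite_finite_induct)
  case (insert x A)
  from insert.hyps have
    "norm ((\<Prod>i\<in>insert x A. 1 + u i) - 1) = norm ((\<Prod>i\<in>A. 1 + u i) - 1 + u x * (\<Prod>i\<in>A. 1 + u i))"
    by (simp add: algebra_simps)
  also have "\<dots> \<le> norm ((\<Prod>i\<in>A. 1 + u i) - 1) + norm (u x * (\<Prod>i\<in>A. 1 + u i))"
    by (rule norm_triangle_ineq)
  also have "norm (u x * (\<Prod>i\<in>A. 1 + u i)) = norm (u x) * (\<Prod>i\<in>A. norm (1 + u i))"
    by (simp add: prod_norm norm_mult)
  also have "(\<Prod>i\<in>A. norm (1 + u i)) \<le> (\<Prod>i\<in>A. 1 + norm (u i))"
    using norm_one_plus_le by (intro prod_mono) auto
  also note insert.IH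
  also have "(\<Prod>i\<in>A. 1 + norm (u i)) - 1 + norm (u x) * (\<Prod>i\<in>A. 1 + norm (u i)) =
             (\<Prod>i\<in>insert x A. 1 + norm (u i)) - 1"
    using insert.hyps by (simp add: algebra_simps)
  finally show ?case by (simp_all add: mult_left_mono)
qed simp_all

lemma norm_prod_one_plus_diff_le:
  fixes u :: "'i \<Rightarrow> 'a :: {real_normed_div_algebra, comm_ring_1}"
  assumes "finite F" "G \<subseteq> F"
  shows "norm ((\<Prod>i\<in>F. 1 + u i) - (\<Prod>i\<in>G. 1 + u i))
           \<le> exp (\<Sum>i\<in>G. norm (u i)) * (exp (\<Sum>i\<in>F - G. norm (u i)) - 1)"
proof -
  have "(\<Prod>i\<in>F. 1 + u i) = (\<Prod>i\<in>G. 1 + u i) * (\<Prod>i\<in>F - G. 1 + u i)"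
    using assms by (subst prod.subset_diff[of G F]) (auto simp: mult.commute)
  hence "(\<Prod>i\<in>F. 1 + u i) - (\<Prod>i\<in>G. 1 + u i) = (\<Prod>i\<in>G. 1 + u i) * ((\<Prod>i\<in>F - G. 1 + u i) - 1)"
    by (simp add: algebra_simps)
  hence "norm ((\<Prod>i\<in>F. 1 + u i) - (\<Prod>i\<in>G. 1 + u i))
           = (\<Prod>i\<in>G. norm (1 + u i)) * norm ((\<Prod>i\<in>F - G. 1 + u i) - 1)"
    by (simp add: norm_mult prod_norm)
  also have "\<dots> \<le> (\<Prod>i\<in>G. 1 + norm (u i)) * ((\<Prod>i\<in>F - G. 1 + norm (u i)) - 1)"
    using norm_one_plus_le
    by (intro mult_mono prod_mono norm_prod_one_plus_minus_one_le) (auto intro: prod_nonneg)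
  also have "\<dots> \<le> exp (\<Sum>i\<in>G. norm (u i)) * (exp (\<Sum>i\<in>F - G. norm (u i)) - 1)"
  proof (rule mult_mono)
    have "1 \<le> (\<Prod>i\<in>F - G. 1 + norm (u i))" by (rule prod_ge_1) simp
    thus "0 \<le> (\<Prod>i\<in>F - G. 1 + norm (u i)) - 1" by simp
  qed (auto intro: prod_le_exp_sum diff_right_mono)
  finally show ?thesis .
qed

lemma summable_on_tail_le:
  fixes M :: "'i \<Rightarrow> real"
  assumes M: "M summable_on I" and nonneg: "\<And>i. i \<in> I \<Longrightarrow> M i \<ge> 0" and e: "e > 0"
  obtains F0 where "finite F0" "F0 \<subseteq> I" "\<And>G. finite G \<Longrightarrow> G \<subseteq> I - F0 \<Longrightarrow> sum M G \<le> e"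
proof -
  obtain F0 where F0: "finite F0" "F0 \<subseteq> I" "dist (sum M F0) (infsum M I) \<le> e"
    using infsum_finite_approximation[OF M e] by blast
  have "sum M G \<le> e" if G: "finite G" "G \<subseteq> I - F0" for G
  proof -
    have "sum M F0 + sum M G = sum M (F0 \<union> G)"
      using G F0 by (intro sum.union_disjoint[symmetric]) auto
    also have "\<dots> \<le> infsum M I"
      using G F0 by (intro finite_sum_le_infsum M) (auto intro: nonneg)
    finally show ?thesis using F0(3) by (auto simp: dist_real_def)
  qed
  with F0 that show ?thesis by blast
qed

lemma uniform_limit_prod_one_plus:
  fixes u :: "'i \<Rightarrow> 'x \<Rightarrow> 'a :: {banach, real_normed_div_algebra, comm_ring_1}"
  assumes M: "M summable_on I" and nonneg: "\<And>i. i \<in> I \<Longrightarrow> M i \<ge> 0"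
      and bound: "\<And>i x. i \<in> I \<Longrightarrow> x \<in> K \<Longrightarrow> norm (u i x) \<le> M i"
  shows "uniform_limit K (\<lambda>F x. \<Prod>i\<in>F. 1 + u i x)
           (\<lambda>x. Lim (finite_subsets_at_top I) (\<lambda>F. \<Prod>i\<in>F. 1 + u i x)) (finite_subsets_at_top I)"
proof (rule uniform_limit_finite_subsets_Lim)
  fix e :: real assume e: "e > 0"
  define S where "S = infsum M I"
  define \<delta> where "\<delta> = ln (1 + e / exp S)"
  have pos: "0 < e / exp S" using e by simp
  hence "\<delta> > 0" unfolding \<delta>_def by (intro ln_gt_zero) simp
  have "exp \<delta> = 1 + e / exp S" unfolding \<delta>_def using pos by (intro exp_ln) simp
  hence \<delta>_eq: "exp S * (exp \<delta> - 1) = e" by simp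
  obtain F0 where F0: "finite F0" "F0 \<subseteq> I" "\<And>G. finite G \<Longrightarrow> G \<subseteq> I - F0 \<Longrightarrow> sum M G \<le> \<delta>"
    using summable_on_tail_le[OF M nonneg \<open>\<delta> > 0\<close>] by blast
  have "dist (\<Prod>i\<in>F. 1 + u i x) (\<Prod>i\<in>F0. 1 + u i x) \<le> e"
    if F: "finite F" "F0 \<subseteq> F" "F \<subseteq> I" and x: "x \<in> K" for F x
  proof -
    have "(\<Sum>i\<in>F0. norm (u i x)) \<le> sum M F0"
      by (rule sum_mono) (use F0 bound x in auto)
    also have "sum M F0 \<le> S"
      unfolding S_def by (rule finite_sum_le_infsum[OF M F0(1,2)]) (use nonneg in auto)
    finally have head: "exp (\<Sum>i\<in>F0. norm (u i x)) \<le> exp S" by simp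
    have "(\<Sum>i\<in>F - F0. norm (u i x)) \<le> sum M (F - F0)"
      by (rule sum_mono) (use F bound x in auto)
    also have "sum M (F - F0) \<le> \<delta>"
      by (rule F0(3)) (use F in auto)
    finally have tail: "exp (\<Sum>i\<in>F - F0. norm (u i x)) - 1 \<le> exp \<delta> - 1" by simp
    have "dist (\<Prod>i\<in>F. 1 + u i x) (\<Prod>i\<in>F0. 1 + u i x)
            \<le> exp (\<Sum>i\<in>F0. norm (u i x)) * (exp (\<Sum>i\<in>F - F0. norm (u i x)) - 1)"
      unfolding dist_norm by (rule norm_prod_one_plus_diff_le[OF F(1,2)])
    also have "\<dots> \<le> exp S * (exp \<delta> - 1)"
      using head tail by (rule mult_mono) (simp_all add: sum_nonneg)
    finally show ?thesis unfolding \<delta>_eq .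
  qed
  with F0(1,2) show "\<exists>F0. finite F0 \<and> F0 \<subseteq> I \<and> (\<forall>F x. finite F \<and> F0 \<subseteq> F \<and> F \<subseteq> I \<and> x \<in> K \<longrightarrow>
                  dist (\<Prod>i\<in>F. 1 + u i x) (\<Prod>i\<in>F0. 1 + u i x) \<le> e)"
    by (intro exI[of _ F0]) simp
qed

section \<open>The Weierstrass sigma and zeta functions\<close>

lemma weierstrass_factor_2_eq: "weierstrass_factor 2 w = exp (w + w\<^sup>2 / 2) * (1 - w)"
proof -
  have "{1..2::nat} = {1, 2}" by auto
  thus ?thesis by (simp add: weierstrass_factor_def mult.commute)
qed

lemma sigma_factor_eq_weierstrass_factor:
  "exp (z / l + z\<^sup>2 / (2 * l\<^sup>2)) * (1 - z / l) = weierstrass_factor 2 (z / l)"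
  by (simp add: weierstrass_factor_2_eq power_divide mult.commute)

text \<open>The term for l = 0 is the pole 1 / z, so that zeta is a sum over the whole lattice.\<close>
definition zeta_term :: "complex \<Rightarrow> complex \<Rightarrow> complex" where
  "zeta_term z l = (if l = 0 then 1 / z else 1 / (z - l) + 1 / l + z / l\<^sup>2)"

lemma zeta_term_0 [simp]: "zeta_term z 0 = 1 / z"
  by (simp add: zeta_term_def)

lemma zeta_term_eq: "l \<noteq> 0 \<Longrightarrow> z \<noteq> l \<Longrightarrow> zeta_term z l = z\<^sup>2 / (l\<^sup>2 * (z - l))"
  by (simp add: zeta_term_def field_simps power2_eq_square)

lemma weierstrass_factor_2_div_has_field_derivative:
  assumes "l \<noteq> 0" "z \<noteq> l"
  shows "((\<lambda>w. weierstrass_factor 2 (w / l)) has_field_derivative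
           weierstrass_factor 2 (z / l) * zeta_term z l) (at z)"
proof -
  have "z - l \<noteq> 0" using assms by simp
  have "((\<lambda>w. exp (w / l + (w / l)\<^sup>2 / 2) * (1 - w / l)) has_field_derivative
          exp (z / l + (z / l)\<^sup>2 / 2) * (- z\<^sup>2 / l ^ 3)) (at z)"
    using assms by (auto intro!: derivative_eq_intros simp: field_simps power2_eq_square power3_eq_cube)
  moreover have "exp (z / l + (z / l)\<^sup>2 / 2) * (- z\<^sup>2 / l ^ 3)
                   = exp (z / l + (z / l)\<^sup>2 / 2) * (1 - z / l) * zeta_term z l"
    using assms \<open>z - l \<noteq> 0\<close> by (simp add: zeta_term_eq field_simps power2_eq_square power3_eq_cube)
  ultimately show ?thesis by (simp add: weierstrass_factor_2_eq)
qed

lemma partial_sigma_has_field_derivative: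
  assumes F: "finite F" "0 \<notin> F" "z \<notin> F" and z: "z \<noteq> 0"
  shows "((\<lambda>w. w * (\<Prod>l\<in>F. weierstrass_factor 2 (w / l))) has_field_derivative
           z * (\<Prod>l\<in>F. weierstrass_factor 2 (z / l)) * (\<Sum>l\<in>insert 0 F. zeta_term z l)) (at z)"
proof -
  have nonzero: "weierstrass_factor 2 (z / l) \<noteq> 0" if "l \<in> F" for l
    using that F by auto
  have "((\<lambda>w. \<Prod>l\<in>F. weierstrass_factor 2 (w / l)) has_field_derivative
          (\<Prod>l\<in>F. weierstrass_factor 2 (z / l)) *
          (\<Sum>l\<in>F. weierstrass_factor 2 (z / l) * zeta_term z l / weierstrass_factor 2 (z / l))) (at z)"
    using F nonzero
    by (intro has_field_derivative_prod' weierstrass_factor_2_div_has_field_derivative) auto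
  also have "(\<Sum>l\<in>F. weierstrass_factor 2 (z / l) * zeta_term z l / weierstrass_factor 2 (z / l))
               = (\<Sum>l\<in>F. zeta_term z l)"
    using nonzero by (intro sum.cong) auto
  finally have "((\<lambda>w. w * (\<Prod>l\<in>F. weierstrass_factor 2 (w / l))) has_field_derivative
          z * ((\<Prod>l\<in>F. weierstrass_factor 2 (z / l)) * (\<Sum>l\<in>F. zeta_term z l))
          + 1 * (\<Prod>l\<in>F. weierstrass_factor 2 (z / l))) (at z)"
    by (rule DERIV_mult'[OF DERIV_ident])
  moreover have "(\<Sum>l\<in>insert 0 F. zeta_term z l) = 1 / z + (\<Sum>l\<in>F. zeta_term z l)"
    using F by (simp add: zeta_term_def)
  hence "z * (\<Prod>l\<in>F. weierstrass_factor 2 (z / l)) * (\<Sum>l\<in>insert 0 F. zeta_term z l)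
           = z * ((\<Prod>l\<in>F. weierstrass_factor 2 (z / l)) * (\<Sum>l\<in>F. zeta_term z l))
             + 1 * (\<Prod>l\<in>F. weierstrass_factor 2 (z / l))"
    using z by (simp add: algebra_simps)
  ultimately show ?thesis by simp
qed

context complex_lattice
begin

abbreviation "\<sigma> \<equiv> weierstrass_sigma L"

definition sigma_product :: "complex \<Rightarrow> complex" where
  "sigma_product z = Lim (finite_subsets_at_top (L - {0})) (\<lambda>F. \<Prod>l\<in>F. weierstrass_factor 2 (z / l))"

lemma weierstrass_sigma_eq: "\<sigma> z = z * sigma_product z"
  by (simp add: weierstrass_sigma_def sigma_product_def sigma_factor_eq_weierstrass_factor)

lemma sigma_product_uniform_limit:
  assumes R: "R > 0"
  shows "uniform_limit (cball 0 R) (\<lambda>F z. \<Prod>l\<in>F. weierstrass_factor 2 (z / l)) sigma_product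
           (finite_subsets_at_top (L - {0}))"
proof -
  have "\<forall>l. \<exists>b. \<forall>z\<in>cball 0 R. norm (weierstrass_factor 2 (z / l) - 1) \<le> b"
  proof
    fix l :: complex
    show "\<exists>b. \<forall>z\<in>cball 0 R. norm (weierstrass_factor 2 (z / l) - 1) \<le> b"
    proof (cases "l = 0")
      case False
      hence "compact ((\<lambda>z. weierstrass_factor 2 (z / l) - 1) ` cball 0 R)"
        by (intro compact_continuous_image continuous_intros) auto
      thus ?thesis by (auto dest!: compact_imp_bounded simp: bounded_iff)
    qed (auto intro: exI[of _ 0])
  qed
  then obtain B where B: "\<And>l z. z \<in> cball 0 R \<Longrightarrow> norm (weierstrass_factor 2 (z / l) - 1) \<le> B l"
    by metis
  define M where "M = (\<lambda>l. if norm l < 2 * R then B l else 3 * R ^ 3 / norm l ^ 3)"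
  have M_nonneg: "M l \<ge> 0" for l
    using B[of 0 l] R by (auto simp: M_def intro: order.trans[OF norm_ge_zero])
  have "M summable_on (L - {0})"
  proof (rule summable_on_lattice_cubic_decay[where R = "2 * R"])
    show "norm (M l) \<le> 3 * R ^ 3 / norm l ^ 3" if "2 * R \<le> norm l" for l
      using that R by (simp add: M_def)
  qed (use R in auto)
  moreover have "norm (weierstrass_factor 2 (z / l) - 1) \<le> M l"
    if "l \<in> L - {0}" "z \<in> cball 0 R" for l z
  proof (cases "norm l < 2 * R")
    case False
    hence l: "norm l \<ge> 2 * R" "norm l > 0" using R by auto
    have "norm (z / l) \<le> R / norm l"
      using that l by (simp add: norm_divide divide_right_mono)
    moreover have "R / norm l \<le> 1 / 2" using l R by (simp add: field_simps)
    ultimately have "norm (z / l) \<le> 1 / 2" by linarith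
    hence "norm (weierstrass_factor 2 (z / l) - 1) \<le> 3 * norm (z / l) ^ 3"
      using weierstrass_factor_bound[of "z / l" 2] by (simp add: numeral_3_eq_3)
    also have "\<dots> \<le> 3 * (R / norm l) ^ 3"
      using \<open>norm (z / l) \<le> R / norm l\<close> by (intro mult_left_mono power_mono) auto
    finally have "norm (weierstrass_factor 2 (z / l) - 1) \<le> 3 * (R / norm l) ^ 3" .
    thus ?thesis using False by (simp add: M_def power_divide)
  qed (use B that in \<open>simp add: M_def\<close>)
  ultimately have "uniform_limit (cball 0 R) (\<lambda>F z. \<Prod>l\<in>F. 1 + (weierstrass_factor 2 (z / l) - 1))
      (\<lambda>z. Lim (finite_subsets_at_top (L - {0})) (\<lambda>F. \<Prod>l\<in>F. 1 + (weierstrass_factor 2 (z / l) - 1)))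
      (finite_subsets_at_top (L - {0}))"
    by (intro uniform_limit_prod_one_plus) (use M_nonneg in auto)
  thus ?thesis unfolding sigma_product_def[abs_def] by simp
qed

lemma sigma_product_tendsto:
  "((\<lambda>F. \<Prod>l\<in>F. weierstrass_factor 2 (z / l)) \<longlongrightarrow> sigma_product z) (finite_subsets_at_top (L - {0}))"
  by (rule tendsto_uniform_limitI[OF sigma_product_uniform_limit[of "norm z + 1"]])
     (auto simp: add_nonneg_pos)

lemma holomorphic_sigma_product: "sigma_product holomorphic_on UNIV"
proof -
  have "sigma_product holomorphic_on ball 0 R" if R: "R > 0" for R
  proof (rule holomorphic_uniform_limit[OF _ sigma_product_uniform_limit[OF R]])
    show "\<forall>\<^sub>F F in finite_subsets_at_top (L - {0}).
            continuous_on (cball 0 R) (\<lambda>z. \<Prod>l\<in>F. weierstrass_factor 2 (z / l)) \<and>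
            (\<lambda>z. \<Prod>l\<in>F. weierstrass_factor 2 (z / l)) holomorphic_on ball 0 R"
      by (intro eventually_finite_subsets_at_top_weakI conjI continuous_intros holomorphic_intros) auto
  qed auto
  hence "sigma_product field_differentiable (at z)" for z
    using holomorphic_on_imp_differentiable_at[of _ "ball 0 (norm z + 1)" z]
    by (simp add: add_nonneg_pos)
  thus ?thesis by (auto simp: holomorphic_on_def field_differentiable_at_within)
qed

lemma sigma_product_0: "sigma_product 0 = 1"
proof -
  have "(\<lambda>F. \<Prod>l\<in>F. weierstrass_factor 2 (0 / l)) = (\<lambda>F. 1)" by simp
  show ?thesis unfolding sigma_product_def \<open>?this\<close> by (rule tendsto_Lim) auto
qed

lemma sigma_product_minus: "sigma_product (- z) = sigma_product z"
proof -
  have inj: "inj_on uminus (L - {0})" by (auto simp: inj_on_def)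
  have img: "uminus ` (L - {0}) = L - {0}"
    by (auto intro: image_eqI[of _ _ "- x" for x])
  have "((\<lambda>F. \<Prod>l\<in>F. weierstrass_factor 2 (z / l)) \<longlongrightarrow> sigma_product z)
          (filtermap ((`) uminus) (finite_subsets_at_top (L - {0})))"
    using sigma_product_tendsto[of z] img
    by (simp add: filtermap_image_finite_subsets_at_top[OF inj])
  hence "((\<lambda>F. \<Prod>l\<in>uminus ` F. weierstrass_factor 2 (z / l)) \<longlongrightarrow> sigma_product z)
          (finite_subsets_at_top (L - {0}))"
    by (simp add: filterlim_filtermap o_def)
  moreover have "(\<Prod>l\<in>uminus ` F. weierstrass_factor 2 (z / l)) = (\<Prod>l\<in>F. weierstrass_factor 2 (- z / l))" for F
    by (simp add: prod.reindex inj_on_def)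
  ultimately have "((\<lambda>F. \<Prod>l\<in>F. weierstrass_factor 2 (- z / l)) \<longlongrightarrow> sigma_product z)
                     (finite_subsets_at_top (L - {0}))"
    by simp
  thus ?thesis
    using sigma_product_tendsto[of "- z"] tendsto_unique finite_subsets_at_top_neq_bot by blast
qed

lemma sigma_product_lattice: "l \<in> L - {0} \<Longrightarrow> sigma_product l = 0"
proof -
  assume l: "l \<in> L - {0}"
  have "\<forall>\<^sub>F F in finite_subsets_at_top (L - {0}). (\<Prod>m\<in>F. weierstrass_factor 2 (l / m)) = 0"
    unfolding eventually_finite_subsets_at_top using l by (intro exI[of _ "{l}"]) auto
  hence "((\<lambda>F. \<Prod>m\<in>F. weierstrass_factor 2 (l / m)) \<longlongrightarrow> 0) (finite_subsets_at_top (L - {0}))"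
    by (rule tendsto_eventually)
  thus ?thesis
    using sigma_product_tendsto[of l] tendsto_unique finite_subsets_at_top_neq_bot by blast
qed

lemma holomorphic_sigma: "\<sigma> holomorphic_on UNIV"
  unfolding weierstrass_sigma_eq by (intro holomorphic_intros holomorphic_sigma_product)

lemma sigma_minus: "\<sigma> (- z) = - \<sigma> z"
  by (simp add: weierstrass_sigma_eq sigma_product_minus)

lemma sigma_lattice: "l \<in> L \<Longrightarrow> \<sigma> l = 0"
  using sigma_product_lattice[of l] by (cases "l = 0") (auto simp: weierstrass_sigma_eq)

lemma sigma_nonzero_somewhere: "\<exists>z. \<sigma> z \<noteq> 0"
proof -
  have "isCont sigma_product 0"
    using holomorphic_sigma_product holomorphic_on_imp_continuous_on continuous_on_eq_continuous_at by blast
  then obtain r where r: "r > 0" "\<And>y. dist 0 y < r \<Longrightarrow> sigma_product y \<noteq> 0"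
    using continuous_at_avoid[of 0 sigma_product 0] sigma_product_0 by auto
  hence "\<sigma> (of_real (r / 2)) \<noteq> 0" by (simp add: weierstrass_sigma_eq dist_norm)
  thus ?thesis by blast
qed

end

lemma zeta_term_shift:
  assumes "m \<noteq> 0" "m + p \<noteq> 0"
  shows "zeta_term (z + p) (m + p) - zeta_term z m
           = - p\<^sup>2 * (1 / (m * (m + p)\<^sup>2)) - z * (1 / m\<^sup>2 - 1 / (m + p)\<^sup>2)"
proof -
  have "1 / q + (z + (q - m)) / q\<^sup>2 - 1 / m - z / m\<^sup>2
          = - (q - m)\<^sup>2 * (1 / (m * q\<^sup>2)) - z * (1 / m\<^sup>2 - 1 / q\<^sup>2)" if "q \<noteq> 0" for q
    using that assms(1) by (simp add: field_simps power2_eq_square)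
  from this[of "m + p"] assms(2)
  have "1 / (m + p) + (z + p) / (m + p)\<^sup>2 - 1 / m - z / m\<^sup>2
          = - p\<^sup>2 * (1 / (m * (m + p)\<^sup>2)) - z * (1 / m\<^sup>2 - 1 / (m + p)\<^sup>2)"
    by simp
  moreover have "zeta_term (z + p) (m + p) - zeta_term z m
                   = 1 / (m + p) + (z + p) / (m + p)\<^sup>2 - 1 / m - z / m\<^sup>2"
    using assms by (simp add: zeta_term_def)
  ultimately show ?thesis by simp
qed

lemma zeta_term_shift_exceptional:
  assumes "p \<noteq> 0"
  shows "(zeta_term (z + p) (0 + p) - zeta_term z 0) + (zeta_term (z + p) (- p + p) - zeta_term z (- p))
           = 3 / p"
proof -
  have at_0: "zeta_term (z + p) (0 + p) - zeta_term z 0 = 1 / p + (z + p) / p\<^sup>2"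
    using assms by (simp add: zeta_term_def)
  have at_minus_p: "zeta_term (z + p) (- p + p) - zeta_term z (- p) = 1 / p - z / p\<^sup>2"
    using assms by (simp add: zeta_term_def)
  show ?thesis
    unfolding at_0 at_minus_p using assms by (simp add: field_simps power2_eq_square)
qed

lemma infsum_diff:
  fixes f g :: "'a \<Rightarrow> 'b :: {topological_ab_group_add, t2_space}"
  assumes "f summable_on A" "g summable_on A"
  shows "infsum (\<lambda>x. f x - g x) A = infsum f A - infsum g A"
  using infsum_add[OF assms(1) summable_on_uminus[THEN iffD2, OF assms(2)]] infsum_uminus[of g A]
  by simp

lemma summable_on_diff:
  fixes f g :: "'a \<Rightarrow> 'b :: topological_ab_group_add"
  assumes "f summable_on A" "g summable_on A"
  shows "(\<lambda>x. f x - g x) summable_on A"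
  using summable_on_add[OF assms(1) summable_on_uminus[THEN iffD2, OF assms(2)]] by simp

lemma infsum_remove_two:
  fixes f :: "'a \<Rightarrow> 'b :: banach"
  assumes f: "f summable_on A" and ab: "a \<in> A" "b \<in> A" "a \<noteq> b"
  shows "infsum f A = f a + f b + infsum f (A - {a, b})"
proof -
  have A: "insert a (insert b (A - {a, b})) = A" using ab by auto
  have summable: "f summable_on (A - {a, b})" "f summable_on insert b (A - {a, b})"
    by (rule summable_on_subset_banach[OF f]; use ab in auto)+
  have "infsum f (insert a (insert b (A - {a, b}))) = f a + infsum f (insert b (A - {a, b}))"
    by (rule infsum_insert) (use ab summable in auto)
  also have "infsum f (insert b (A - {a, b})) = f b + infsum f (A - {a, b})"
    by (rule infsum_insert) (use summable in auto)
  finally show ?thesis unfolding A by (simp add: add.assoc)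
qed

context complex_lattice
begin

definition weierstrass_zeta :: "complex \<Rightarrow> complex" where
  "weierstrass_zeta z = (\<Sum>\<^sub>\<infinity>l\<in>L. zeta_term z l)"

lemma summable_on_zeta_term:
  assumes z: "z \<notin> L"
  shows "zeta_term z summable_on L"
proof (rule summable_on_lattice_cubic_decay[where R = "2 * norm z + 1" and C = "2 * norm z ^ 2"])
  fix l assume l: "l \<in> L" "2 * norm z + 1 \<le> norm l"
  have "norm l > 0" using l(2) norm_ge_zero[of z] by linarith
  hence "l \<noteq> 0" "l \<noteq> z" using l z by auto
  have far: "norm (z - l) \<ge> norm l / 2"
    using norm_triangle_ineq2[of l z] l by (simp add: norm_minus_commute)
  have "norm (zeta_term z l) = norm z ^ 2 / (norm l ^ 2 * norm (z - l))"
    using \<open>l \<noteq> 0\<close> \<open>l \<noteq> z\<close> by (simp add: zeta_term_eq norm_divide norm_mult norm_power)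
  also have "\<dots> \<le> norm z ^ 2 / (norm l ^ 2 * (norm l / 2))"
    using far \<open>norm l > 0\<close> by (intro divide_left_mono mult_left_mono mult_pos_pos) auto
  also have "\<dots> = 2 * norm z ^ 2 / norm l ^ 3" by (simp add: power2_eq_square power3_eq_cube)
  finally show "norm (zeta_term z l) \<le> 2 * norm z ^ 2 / norm l ^ 3" .
qed (auto intro: add_nonneg_pos)

lemma weierstrass_zeta_eq:
  assumes "z \<notin> L"
  shows "weierstrass_zeta z = 1 / z + (\<Sum>\<^sub>\<infinity>l\<in>L - {0}. zeta_term z l)"
proof -
  have "zeta_term z summable_on (L - {0})"
    using summable_on_zeta_term[OF assms] by (rule summable_on_subset_banach) auto
  hence "infsum (zeta_term z) (insert 0 (L - {0})) = zeta_term z 0 + infsum (zeta_term z) (L - {0})"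
    by (rule infsum_insert) simp
  thus ?thesis unfolding insert_Diff[OF zero_in_lattice] weierstrass_zeta_def by simp
qed

lemma sigma_has_field_derivative:
  assumes z: "z \<notin> L"
  shows "(\<sigma> has_field_derivative \<sigma> z * weierstrass_zeta z) (at z)"
proof -
  define R where "R = norm z + 1"
  have R: "R > 0" "z \<in> ball 0 R" unfolding R_def by (auto intro: add_nonneg_pos)
  define S where "S = (\<lambda>F w. w * (\<Prod>l\<in>F. weierstrass_factor 2 (w / l)))"
  have "continuous_on (cball 0 R) sigma_product"
    using holomorphic_sigma_product holomorphic_on_imp_continuous_on continuous_on_subset by blast
  hence "bounded (sigma_product ` cball 0 R)"
    by (intro compact_imp_bounded compact_continuous_image) auto
  hence "uniform_limit (cball 0 R) S (\<lambda>w. w * sigma_product w) (finite_subsets_at_top (L - {0}))"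
    unfolding S_def
    by (intro uniform_lim_mult[OF uniform_limit_const sigma_product_uniform_limit[OF R(1)]])
       (simp_all add: bounded_cball)
  hence "uniform_limit (ball 0 R) S \<sigma> (finite_subsets_at_top (L - {0}))"
    unfolding weierstrass_sigma_eq[abs_def] by (rule uniform_limit_on_subset) auto
  moreover have "\<forall>\<^sub>F F in finite_subsets_at_top (L - {0}). S F holomorphic_on ball 0 R"
    by (rule eventually_finite_subsets_at_top_weakI) (auto simp: S_def intro!: holomorphic_intros)
  ultimately have lim_deriv: "((\<lambda>F. deriv (S F) z) \<longlongrightarrow> deriv \<sigma> z) (finite_subsets_at_top (L - {0}))"
    using R by (intro deriv_complex_uniform_limit) auto
  have deriv_eq: "\<forall>\<^sub>F F in finite_subsets_at_top (L - {0}).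
                   S F z * (\<Sum>l\<in>insert 0 F. zeta_term z l) = deriv (S F) z"
  proof (rule eventually_finite_subsets_at_top_weakI)
    fix F assume "finite F" "F \<subseteq> L - {0}"
    hence "(S F has_field_derivative S F z * (\<Sum>l\<in>insert 0 F. zeta_term z l)) (at z)"
      unfolding S_def using z by (intro partial_sigma_has_field_derivative) auto
    thus "S F z * (\<Sum>l\<in>insert 0 F. zeta_term z l) = deriv (S F) z"
      by (rule DERIV_imp_deriv[symmetric])
  qed
  have "((\<lambda>F. S F z * (\<Sum>l\<in>insert 0 F. zeta_term z l)) \<longlongrightarrow> \<sigma> z * weierstrass_zeta z)
                   (finite_subsets_at_top (L - {0}))"
  proof (rule tendsto_mult)
    show "((\<lambda>F. S F z) \<longlongrightarrow> \<sigma> z) (finite_subsets_at_top (L - {0}))"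
      unfolding S_def weierstrass_sigma_eq by (intro tendsto_intros sigma_product_tendsto)
    have "zeta_term z summable_on (L - {0})"
      using summable_on_zeta_term[OF z] by (rule summable_on_subset_banach) auto
    hence "((\<lambda>F. 1 / z + sum (zeta_term z) F) \<longlongrightarrow> weierstrass_zeta z) (finite_subsets_at_top (L - {0}))"
      unfolding weierstrass_zeta_eq[OF z] by (intro tendsto_add tendsto_const) (simp add: has_sum_def[symmetric])
    moreover have "\<forall>\<^sub>F F in finite_subsets_at_top (L - {0}).
                     1 / z + sum (zeta_term z) F = (\<Sum>l\<in>insert 0 F. zeta_term z l)"
      by (rule eventually_finite_subsets_at_top_weakI) (subst sum.insert; auto)
    ultimately show "((\<lambda>F. \<Sum>l\<in>insert 0 F. zeta_term z l) \<longlongrightarrow> weierstrass_zeta z)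
                       (finite_subsets_at_top (L - {0}))"
      by (rule Lim_transform_eventually)
  qed
  hence "((\<lambda>F. deriv (S F) z) \<longlongrightarrow> \<sigma> z * weierstrass_zeta z) (finite_subsets_at_top (L - {0}))"
    using deriv_eq by (rule Lim_transform_eventually)
  hence "deriv \<sigma> z = \<sigma> z * weierstrass_zeta z"
    by (rule tendsto_unique[OF finite_subsets_at_top_neq_bot lim_deriv])
  moreover have "\<sigma> field_differentiable (at z)"
    using holomorphic_sigma holomorphic_on_imp_differentiable_at by blast
  ultimately show ?thesis using DERIV_deriv_iff_field_differentiable by metis
qed

lemma summable_on_lattice_shift:
  fixes g :: "complex \<Rightarrow> 'a :: banach"
  assumes "g summable_on L" "p \<in> L"
  shows "(\<lambda>m. g (m + p)) summable_on L"
proof -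
  have "g summable_on L \<longleftrightarrow> (\<lambda>m. g (m + p)) summable_on L"
    by (rule summable_on_reindex_bij_witness[of _ "\<lambda>m. m + p" "\<lambda>l. l - p"])
       (use assms in \<open>auto intro: add_in_lattice diff_in_lattice\<close>)
  with assms show ?thesis by simp
qed

lemma infsum_lattice_shift:
  fixes g :: "complex \<Rightarrow> 'a :: banach"
  assumes "p \<in> L"
  shows "infsum g L = infsum (\<lambda>m. g (m + p)) L"
  by (rule infsum_reindex_bij_witness[of _ "\<lambda>m. m + p" "\<lambda>l. l - p"])
     (use assms in \<open>auto intro: add_in_lattice diff_in_lattice\<close>)

definition weierstrass_eta :: "complex \<Rightarrow> complex" where
  "weierstrass_eta p = 3 / p - p\<^sup>2 * (\<Sum>\<^sub>\<infinity>l\<in>L - {0, - p}. 1 / (l * (l + p)\<^sup>2))"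

lemma v_term_eq: "v_term L \<xi> p = - \<xi> * weierstrass_eta p"
  by (simp add: v_term_def weierstrass_eta_def algebra_simps)

lemma summable_on_eta_summand:
  assumes "p \<in> L"
  shows "(\<lambda>m. 1 / (m * (m + p)\<^sup>2)) summable_on (L - {0, - p})"
proof (rule summable_on_lattice_cubic_decay[where R = "2 * norm p + 1" and C = 4])
  fix m assume m: "m \<in> L - {0, - p}" "2 * norm p + 1 \<le> norm m"
  have "norm m > 0" using m by auto
  have far: "norm (m + p) \<ge> norm m / 2" using norm_diff_ineq[of m p] m by simp
  have "norm (1 / (m * (m + p)\<^sup>2)) = 1 / (norm m * norm (m + p) ^ 2)"
    by (simp add: norm_divide norm_mult norm_power)
  also have "\<dots> \<le> 1 / (norm m * (norm m / 2) ^ 2)"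
    using far \<open>norm m > 0\<close> by (intro divide_left_mono mult_left_mono mult_pos_pos power_mono) auto
  also have "\<dots> = 4 / norm m ^ 3" by (simp add: field_simps power2_eq_square power3_eq_cube)
  finally show "norm (1 / (m * (m + p)\<^sup>2)) \<le> 4 / norm m ^ 3" .
qed (auto intro: add_nonneg_pos)

lemma summable_on_inverse_square_diff:
  assumes "p \<in> L"
  shows "(\<lambda>m. 1 / m\<^sup>2 - 1 / (m + p)\<^sup>2) summable_on (L - {0, - p})"
proof (rule summable_on_lattice_cubic_decay[where R = "2 * norm p + 1" and C = "10 * norm p"])
  fix m assume m: "m \<in> L - {0, - p}" "2 * norm p + 1 \<le> norm m"
  have nonzero: "m \<noteq> 0" "m + p \<noteq> 0" using m by (auto simp: add_eq_0_iff)
  have "norm m > 0" using m by auto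
  have far: "norm (m + p) \<ge> norm m / 2" using norm_diff_ineq[of m p] m by simp
  have "1 / m\<^sup>2 - 1 / q\<^sup>2 = (q - m) * (2 * m + (q - m)) / (m\<^sup>2 * q\<^sup>2)" if "q \<noteq> 0" for q
    using that nonzero(1) by (simp add: field_simps power2_eq_square)
  from this[of "m + p"] nonzero(2)
  have "1 / m\<^sup>2 - 1 / (m + p)\<^sup>2 = p * (2 * m + p) / (m\<^sup>2 * (m + p)\<^sup>2)" by simp
  hence "norm (1 / m\<^sup>2 - 1 / (m + p)\<^sup>2) = norm p * norm (2 * m + p) / (norm m ^ 2 * norm (m + p) ^ 2)"
    by (simp add: norm_divide norm_mult norm_power)
  also have "\<dots> \<le> norm p * (5 / 2 * norm m) / (norm m ^ 2 * (norm m / 2) ^ 2)"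
    using far \<open>norm m > 0\<close> norm_triangle_ineq[of "2 * m" p] m
    by (intro frac_le mult_left_mono mult_pos_pos power_mono) auto
  also have "\<dots> = 10 * norm p / norm m ^ 3"
    using \<open>norm m > 0\<close> by (simp add: field_simps power2_eq_square power3_eq_cube)
  finally show "norm (1 / m\<^sup>2 - 1 / (m + p)\<^sup>2) \<le> 10 * norm p / norm m ^ 3" .
qed (auto intro: add_nonneg_pos)

lemma infsum_inverse_square_diff_eq_0:
  assumes "p \<in> L"
  shows "(\<Sum>\<^sub>\<infinity>m\<in>L - {0, - p}. 1 / m\<^sup>2 - 1 / (m + p)\<^sup>2) = 0"
proof -
  let ?f = "\<lambda>m. 1 / m\<^sup>2 - 1 / (m + p)\<^sup>2"
  \<comment> \<open>the involution m \<mapsto> - m - p of L - {0, - p} negates the summand\<close>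
  have "infsum ?f (L - {0, - p}) = infsum (\<lambda>m. - ?f m) (L - {0, - p})"
    by (rule infsum_reindex_bij_witness[of _ "\<lambda>m. - m - p" "\<lambda>m. - m - p"])
       (use assms in \<open>auto simp: diff_in_lattice power2_commute algebra_simps\<close>)
  also have "\<dots> = - infsum ?f (L - {0, - p})"
    by (rule infsum_uminus)
  finally show ?thesis by simp
qed

lemma weierstrass_zeta_shift:
  assumes p: "p \<in> L" and z: "z \<notin> L"
  shows "weierstrass_zeta (z + p) - weierstrass_zeta z = weierstrass_eta p"
proof (cases "p = 0")
  case False
  have "z + p \<notin> L" using z p add_in_lattice_iff by blast
  define d where "d = (\<lambda>m. zeta_term (z + p) (m + p) - zeta_term z m)"
  have shifted: "(\<lambda>m. zeta_term (z + p) (m + p)) summable_on L"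
    using summable_on_lattice_shift[OF summable_on_zeta_term[OF \<open>z + p \<notin> L\<close>] p] .
  have "weierstrass_zeta (z + p) - weierstrass_zeta z = infsum d L"
    unfolding weierstrass_zeta_def d_def infsum_lattice_shift[OF p, of "zeta_term (z + p)"]
    by (rule infsum_diff[symmetric, OF shifted summable_on_zeta_term[OF z]])
  also have "\<dots> = d 0 + d (- p) + infsum d (L - {0, - p})"
    using shifted summable_on_zeta_term[OF z] p False unfolding d_def
    by (intro infsum_remove_two summable_on_diff) auto
  also have "d 0 + d (- p) = 3 / p"
    using zeta_term_shift_exceptional[OF False, of z] by (simp add: d_def)
  also have "infsum d (L - {0, - p})
               = (\<Sum>\<^sub>\<infinity>m\<in>L - {0, - p}. - p\<^sup>2 * (1 / (m * (m + p)\<^sup>2)) - z * (1 / m\<^sup>2 - 1 / (m + p)\<^sup>2))"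
  proof (rule infsum_cong)
    fix m assume "m \<in> L - {0, - p}"
    hence "m \<noteq> 0" "m + p \<noteq> 0" by (auto simp: add_eq_0_iff)
    thus "d m = - p\<^sup>2 * (1 / (m * (m + p)\<^sup>2)) - z * (1 / m\<^sup>2 - 1 / (m + p)\<^sup>2)"
      unfolding d_def by (rule zeta_term_shift)
  qed
  also have "\<dots> = (\<Sum>\<^sub>\<infinity>m\<in>L - {0, - p}. - p\<^sup>2 * (1 / (m * (m + p)\<^sup>2)))
                    - (\<Sum>\<^sub>\<infinity>m\<in>L - {0, - p}. z * (1 / m\<^sup>2 - 1 / (m + p)\<^sup>2))"
    by (intro infsum_diff summable_on_cmult_right summable_on_eta_summand
          summable_on_inverse_square_diff p)
  also have "\<dots> = - p\<^sup>2 * (\<Sum>\<^sub>\<infinity>m\<in>L - {0, - p}. 1 / (m * (m + p)\<^sup>2))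
                    - z * (\<Sum>\<^sub>\<infinity>m\<in>L - {0, - p}. 1 / m\<^sup>2 - 1 / (m + p)\<^sup>2)"
    by (simp only: infsum_cmult_right[OF summable_on_eta_summand[OF p]]
          infsum_cmult_right[OF summable_on_inverse_square_diff[OF p]])
  finally show ?thesis
    using infsum_inverse_square_diff_eq_0[OF p] by (simp add: weierstrass_eta_def)
qed (simp add: weierstrass_eta_def)

end

section \<open>Quasi-periodicity of sigma and Legendre's relation\<close>

lemma odd_quasi_periodic_multiplier_square:
  fixes \<phi> :: "'a :: ab_group_add \<Rightarrow> 'b :: field"
  assumes odd: "\<And>w. \<phi> (- w) = - \<phi> w" and shift: "\<And>w. \<phi> (w + p) = M * \<phi> w" and "\<phi> z \<noteq> 0"
  shows "M * M = 1"
proof -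
  have "- \<phi> z = \<phi> (- (z + p) + p)" by (simp add: odd)
  also have "\<dots> = - (M * (M * \<phi> z))" by (simp only: shift odd mult_minus_right)
  finally show ?thesis using \<open>\<phi> z \<noteq> 0\<close> by (simp add: mult.assoc[symmetric])
qed

lemma norm_periodic_int_multiple:
  fixes g :: "'a :: ring_1 \<Rightarrow> 'b :: real_normed_vector"
  assumes periodic: "\<And>z. norm (g (z + p)) = norm (g z)"
  shows "norm (g (z + of_int m * p)) = norm (g z)"
proof -
  have nat: "norm (g (y + of_nat n * p)) = norm (g y)" for y n
  proof (induction n)
    case (Suc n)
    have "y + of_nat (Suc n) * p = (y + of_nat n * p) + p" by (simp add: algebra_simps)
    hence "norm (g (y + of_nat (Suc n) * p)) = norm (g (y + of_nat n * p))" by (simp only: periodic)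
    thus ?case using Suc by simp
  qed simp
  show ?thesis
  proof (cases "m \<ge> 0")
    case True
    thus ?thesis using nat[of z "nat m"] by simp
  next
    case False
    hence "z = (z + of_int m * p) + of_nat (nat (- m)) * p" by (simp add: algebra_simps)
    thus ?thesis using nat[of "z + of_int m * p" "nat (- m)"] by metis
  qed
qed

context complex_lattice
begin

lemma bounded_range_if_norm_lattice_periodic:
  assumes cont: "continuous_on UNIV \<phi>"
      and periodic: "\<And>z. norm (\<phi> (z + p1)) = norm (\<phi> z)" "\<And>z. norm (\<phi> (z + p2)) = norm (\<phi> z)"
  shows "bounded (range \<phi>)"
proof -
  define P where "P = (\<lambda>(s, t). of_real s * p1 + of_real t * p2) ` ({0..1::real} \<times> {0..1::real})"
  have "compact P" unfolding P_def
    by (intro compact_continuous_image compact_Times compact_Icc)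
       (auto simp: case_prod_unfold intro!: continuous_intros)
  hence "compact (\<phi> ` P)" by (rule compact_continuous_image[OF continuous_on_subset[OF cont], rotated]) auto
  then obtain B where B: "\<And>y. y \<in> \<phi> ` P \<Longrightarrow> norm y \<le> B"
    using compact_imp_bounded bounded_iff by metis
  show ?thesis unfolding bounded_iff
  proof (intro exI[of _ B] ballI)
    fix y assume "y \<in> range \<phi>"
    then obtain z where z: "y = \<phi> z" by blast
    obtain s t where st: "z = of_real s * p1 + of_real t * p2" using real_coordinates_exist by blast
    define w where "w = of_real (frac s) * p1 + of_real (frac t) * p2"
    have "w \<in> P" unfolding P_def w_def
      by (rule image_eqI[of _ _ "(frac s, frac t)"]) (auto simp: frac_lt_1 less_imp_le)
    have "z = w + of_int \<lfloor>s\<rfloor> * p1 + of_int \<lfloor>t\<rfloor> * p2"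
      by (simp add: st w_def frac_def algebra_simps)
    hence "norm y = norm (\<phi> w)"
      using z norm_periodic_int_multiple[of \<phi> p2, OF periodic(2), of "w + of_int \<lfloor>s\<rfloor> * p1" "\<lfloor>t\<rfloor>"]
            norm_periodic_int_multiple[of \<phi> p1, OF periodic(1), of w "\<lfloor>s\<rfloor>"] by simp
    also have "\<dots> \<le> B" using B \<open>w \<in> P\<close> by blast
    finally show "norm y \<le> B" .
  qed
qed

lemma sigma_shift_quotient_has_derivative_0:
  assumes p: "p \<in> L" and w: "\<sigma> w \<noteq> 0"
  shows "((\<lambda>w. \<sigma> (w + p) * exp (- (weierstrass_eta p * w)) / \<sigma> w) has_field_derivative 0) (at w)"
proof -
  have "w \<notin> L" using w sigma_lattice by blast
  hence "w + p \<notin> L" using p add_in_lattice_iff by blast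
  have d1: "((\<lambda>w. \<sigma> (w + p)) has_field_derivative \<sigma> (w + p) * weierstrass_zeta (w + p)) (at w)"
    using sigma_has_field_derivative[OF \<open>w + p \<notin> L\<close>] DERIV_shift by blast
  have d2: "((\<lambda>w. exp (- (weierstrass_eta p * w))) has_field_derivative
              exp (- (weierstrass_eta p * w)) * (- weierstrass_eta p)) (at w)"
    by (auto intro!: derivative_eq_intros)
  have "((\<lambda>w. \<sigma> (w + p) * exp (- (weierstrass_eta p * w)) / \<sigma> w) has_field_derivative
          ((\<sigma> (w + p) * weierstrass_zeta (w + p) * exp (- (weierstrass_eta p * w))
            + exp (- (weierstrass_eta p * w)) * (- weierstrass_eta p) * \<sigma> (w + p)) * \<sigma> w
           - \<sigma> (w + p) * exp (- (weierstrass_eta p * w)) * (\<sigma> w * weierstrass_zeta w)) / (\<sigma> w * \<sigma> w))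
        (at w)"
    by (rule DERIV_divide[OF DERIV_mult[OF d1 d2] sigma_has_field_derivative[OF \<open>w \<notin> L\<close>] w])
  moreover have "weierstrass_zeta (w + p) = weierstrass_zeta w + weierstrass_eta p"
    using weierstrass_zeta_shift[OF p \<open>w \<notin> L\<close>] by (simp add: diff_eq_eq add.commute)
  ultimately show ?thesis by (simp add: algebra_simps)
qed

lemma holomorphic_sigma_shift: "(\<lambda>w. \<sigma> (w + c)) holomorphic_on A"
proof -
  have "(\<lambda>w. w + c) holomorphic_on A" by (intro holomorphic_intros)
  thus ?thesis using holomorphic_on_compose_gen[of "\<lambda>w. w + c" A \<sigma> UNIV] holomorphic_sigma
    by (simp add: o_def)
qed

lemma sigma_quasi_periodic:
  assumes p: "p \<in> L"
  obtains K where "K \<noteq> 0" "\<And>w. \<sigma> (w + p) = K * exp (weierstrass_eta p * w) * \<sigma> w"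
proof -
  obtain z0 where z0: "\<sigma> z0 \<noteq> 0" using sigma_nonzero_somewhere by blast
  have "isCont \<sigma> z0"
    using holomorphic_sigma holomorphic_on_imp_continuous_on continuous_on_eq_continuous_at by blast
  from continuous_at_avoid[OF this z0]
  obtain \<epsilon> where "\<epsilon> > 0" and "\<forall>w. dist z0 w < \<epsilon> \<longrightarrow> \<sigma> w \<noteq> 0" by blast
  hence nonzero: "\<And>w. w \<in> ball z0 \<epsilon> \<Longrightarrow> \<sigma> w \<noteq> 0" by simp
  define Q where "Q = (\<lambda>w. \<sigma> (w + p) * exp (- (weierstrass_eta p * w)) / \<sigma> w)"
  have "\<exists>K. \<forall>w\<in>ball z0 \<epsilon>. Q w = K"
  proof (rule has_field_derivative_zero_constant)
    fix w assume "w \<in> ball z0 \<epsilon>"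
    thus "(Q has_field_derivative 0) (at w within ball z0 \<epsilon>)"
      unfolding Q_def
      by (rule has_field_derivative_at_within[OF sigma_shift_quotient_has_derivative_0[OF p nonzero]])
  qed simp
  then obtain K where K: "\<And>w. w \<in> ball z0 \<epsilon> \<Longrightarrow> Q w = K" by blast
  have on_ball: "\<sigma> (w + p) - K * exp (weierstrass_eta p * w) * \<sigma> w = 0" if "w \<in> ball z0 \<epsilon>" for w
  proof -
    have "\<sigma> (w + p) * exp (- (weierstrass_eta p * w)) = K * \<sigma> w"
      using K[OF that] nonzero[OF that] by (simp add: Q_def divide_eq_eq)
    hence "\<sigma> (w + p) * exp (- (weierstrass_eta p * w)) * exp (weierstrass_eta p * w)
             = K * exp (weierstrass_eta p * w) * \<sigma> w"
      by (simp add: mult_ac)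
    thus ?thesis by (simp add: mult.assoc flip: exp_add)
  qed
  have holo: "(\<lambda>w. \<sigma> (w + p) - K * exp (weierstrass_eta p * w) * \<sigma> w) holomorphic_on UNIV"
    by (intro holomorphic_intros holomorphic_sigma holomorphic_sigma_shift)
  have eq: "\<sigma> (w + p) - K * exp (weierstrass_eta p * w) * \<sigma> w = 0" for w
  proof (rule analytic_continuation_open[where s = "ball z0 \<epsilon>" and s' = UNIV and g = "\<lambda>_. 0"
                and f = "\<lambda>w. \<sigma> (w + p) - K * exp (weierstrass_eta p * w) * \<sigma> w"])
    show "ball z0 \<epsilon> \<noteq> {}" using \<open>\<epsilon> > 0\<close> by simp
  qed (use on_ball holo in \<open>auto intro: holomorphic_on_const\<close>)
  have "K \<noteq> 0"
  proof
    assume "K = 0"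
    thus False using eq[of "z0 - p"] z0 by simp
  qed
  thus ?thesis using eq that by simp
qed

lemma legendre_nondegenerate: "p1 * weierstrass_eta p2 \<noteq> p2 * weierstrass_eta p1"
proof
  assume eq: "p1 * weierstrass_eta p2 = p2 * weierstrass_eta p1"
  define \<kappa> where "\<kappa> = weierstrass_eta p1 / p1"
  have eta_eq: "weierstrass_eta p1 = \<kappa> * p1" "weierstrass_eta p2 = \<kappa> * p2"
    using p1_nonzero eq by (simp_all add: \<kappa>_def field_simps)
  define \<phi> where "\<phi> = (\<lambda>z. \<sigma> z * exp (- (\<kappa> * z\<^sup>2 / 2)))"
  obtain z0 where "\<sigma> z0 \<noteq> 0" using sigma_nonzero_somewhere by blast
  hence "\<phi> z0 \<noteq> 0" by (simp add: \<phi>_def)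
  have "norm (\<phi> (z + p)) = norm (\<phi> z)" if p: "p \<in> L" "weierstrass_eta p = \<kappa> * p" for p z
  proof -
    obtain K where K: "\<And>w. \<sigma> (w + p) = K * exp (\<kappa> * p * w) * \<sigma> w"
      using sigma_quasi_periodic[OF p(1)] p(2) by metis
    define M where "M = K * exp (- (\<kappa> * p\<^sup>2 / 2))"
    have shift: "\<phi> (w + p) = M * \<phi> w" for w
    proof -
      have "\<kappa> * p * w + - (\<kappa> * (w + p)\<^sup>2 / 2) = - (\<kappa> * w\<^sup>2 / 2) + - (\<kappa> * p\<^sup>2 / 2)"
        by (simp add: power2_eq_square field_simps)
      hence "exp (\<kappa> * p * w) * exp (- (\<kappa> * (w + p)\<^sup>2 / 2)) = exp (- (\<kappa> * w\<^sup>2 / 2)) * exp (- (\<kappa> * p\<^sup>2 / 2))"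
        by (simp flip: exp_add)
      thus ?thesis by (simp add: \<phi>_def K M_def mult_ac)
    qed
    have "M * M = 1"
      by (rule odd_quasi_periodic_multiplier_square[OF _ shift \<open>\<phi> z0 \<noteq> 0\<close>]) (simp add: \<phi>_def sigma_minus)
    hence "norm M = 1" by (metis norm_mult norm_one abs_norm_cancel abs_square_eq_1 power2_eq_square)
    thus ?thesis by (simp add: shift norm_mult)
  qed
  with eta_eq have "bounded (range \<phi>)"
    by (intro bounded_range_if_norm_lattice_periodic holomorphic_on_imp_continuous_on)
       (auto simp: \<phi>_def intro!: holomorphic_intros holomorphic_sigma)
  hence "\<phi> constant_on UNIV"
    by (intro Liouville_theorem) (auto simp: \<phi>_def intro!: holomorphic_intros holomorphic_sigma)
  hence "\<phi> z0 = \<phi> 0" by (auto simp: constant_on_def)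
  with \<open>\<phi> z0 \<noteq> 0\<close> show False by (simp add: \<phi>_def weierstrass_sigma_eq)
qed

end

section \<open>Periods of the phase\<close>

lemma open_subset_Reals_empty:
  fixes S :: "complex set"
  assumes "open S" "S \<subseteq> \<real>"
  shows "S = {}"
proof (rule ccontr)
  assume "S \<noteq> {}"
  then obtain y where y: "y \<in> S" by blast
  then obtain e where e: "e > 0" "ball y e \<subseteq> S" using assms(1) open_contains_ball by blast
  have "y + \<i> * of_real (e / 2) \<in> ball y e" using e by (simp add: dist_norm norm_mult)
  hence "y + \<i> * of_real (e / 2) \<in> \<real>" "y \<in> \<real>" using e(2) assms(2) y by blast+
  hence "Im (y + \<i> * of_real (e / 2)) = 0" "Im y = 0" by (auto simp: complex_is_Real_iff)
  with \<open>e > 0\<close> show False by simp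
qed

lemma real_valued_holomorphic_imp_constant:
  assumes "f holomorphic_on U" "open U" "connected U" "f ` U \<subseteq> \<real>"
  shows "f constant_on U"
proof (rule ccontr)
  assume "\<not> f constant_on U"
  hence "open (f ` U)" by (intro open_mapping_thm[OF assms(1-3) assms(2)]) auto
  hence "U = {}" using open_subset_Reals_empty assms(4) by blast
  with \<open>\<not> f constant_on U\<close> show False by (simp add: constant_on_def)
qed

lemma is_pole_shift_iff':
  fixes f :: "complex \<Rightarrow> complex"
  shows "is_pole (\<lambda>w. f (w + p)) z \<longleftrightarrow> is_pole f (z + p)"
  using is_pole_shift_iff[of f p z] by (simp add: o_def add.commute)

lemma nicely_meromorphic_on_shift:
  assumes f: "f nicely_meromorphic_on UNIV"
  shows "(\<lambda>z. f (z + p)) nicely_meromorphic_on UNIV"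
  unfolding nicely_meromorphic_on_def
proof (intro conjI ballI)
  have "f meromorphic_on UNIV" using f by (simp add: nicely_meromorphic_on_def)
  thus "(\<lambda>z. f (z + p)) meromorphic_on UNIV"
    by (rule meromorphic_on_compose) (auto intro: analytic_intros)
next
  fix z :: complex
  from f have "(is_pole f (z + p) \<and> f (z + p) = 0) \<or> f \<midarrow>z + p\<rightarrow> f (z + p)"
    by (simp add: nicely_meromorphic_on_def)
  thus "(is_pole (\<lambda>w. f (w + p)) z \<and> f (z + p) = 0) \<or> (\<lambda>w. f (w + p)) \<midarrow>z\<rightarrow> f (z + p)"
  proof
    assume "f \<midarrow>z + p\<rightarrow> f (z + p)"
    hence "(\<lambda>w. f (w + p)) \<midarrow>z + p - p\<rightarrow> f (z + p)" by (rule LIM_offset)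
    thus ?thesis by simp
  qed (simp add: is_pole_shift_iff')
qed

lemma nicely_meromorphic_eq_if_eq_on_open:
  assumes f: "f nicely_meromorphic_on UNIV" and g: "g nicely_meromorphic_on UNIV"
      and U: "open U" "u \<in> U" and eq: "\<And>z. z \<in> U \<Longrightarrow> f z = g z"
  shows "f z = g z"
proof -
  have "(\<lambda>z. f z - g z) meromorphic_on UNIV"
    using f g by (intro meromorphic_intros) (auto simp: nicely_meromorphic_on_def)
  hence "(\<forall>\<^sub>\<approx>z. f z - g z = 0) \<or> (\<forall>\<^sub>\<approx>z. f z - g z \<noteq> 0)"
    by (rule meromorphic_imp_constant_or_avoid) auto
  moreover have "\<not> (\<forall>\<^sub>\<approx>z. f z - g z \<noteq> 0)"
  proof
    assume "\<forall>\<^sub>\<approx>z. f z - g z \<noteq> 0"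
    hence "eventually (\<lambda>z. f z - g z \<noteq> 0) (at u)" by (simp add: eventually_cosparse_open_eq)
    moreover have "eventually (\<lambda>z. z \<in> U) (at u)" by (rule eventually_at_in_open'[OF U])
    ultimately have "eventually (\<lambda>z. False) (at u)" by eventually_elim (use eq in auto)
    thus False by simp
  qed
  ultimately have "\<forall>\<^sub>\<approx>w. f w - g w = 0" by blast
  hence ev: "eventually (\<lambda>w. f w = g w) (at z)" by (simp add: eventually_cosparse_open_eq)
  have "is_pole f z \<longleftrightarrow> is_pole g z" by (rule is_pole_cong[OF ev refl])
  show ?thesis
  proof (cases "is_pole f z")
    case True
    with \<open>is_pole f z \<longleftrightarrow> is_pole g z\<close> f g show ?thesis
      using is_pole_zero_at_nicely_mero by (metis UNIV_I)
  next
    case False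
    with \<open>is_pole f z \<longleftrightarrow> is_pole g z\<close> f g have "f \<midarrow>z\<rightarrow> f z" "g \<midarrow>z\<rightarrow> g z"
      by (auto simp: nicely_meromorphic_on_def)
    moreover from \<open>f \<midarrow>z\<rightarrow> f z\<close> ev have "g \<midarrow>z\<rightarrow> f z"
      by (rule tendsto_cong[THEN iffD1, rotated])
    ultimately show ?thesis using LIM_unique by blast
  qed
qed

lemma phase_period_quotient_real:
  assumes "is_phase_period f p" "\<not> is_pole f z" "\<not> is_pole f (z + p)" "f z \<noteq> 0" "f (z + p) \<noteq> 0"
  shows "f (z + p) / f z = of_real (norm (f (z + p)) / norm (f z))"
proof -
  have "phase f (z + p) = phase f z"
    using assms by (auto simp: is_phase_period_def phase_domain_def)
  thus ?thesis using assms(4,5) by (simp add: phase_def field_simps)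
qed

lemma analytic_at_nonzero_ball:
  assumes "f analytic_on {z}" "f z \<noteq> 0"
  obtains r where "r > 0" "f holomorphic_on ball z r" "\<And>w. w \<in> ball z r \<Longrightarrow> f w \<noteq> 0"
proof -
  obtain r1 where r1: "r1 > 0" "f holomorphic_on ball z r1" using assms(1) analytic_at_ball by blast
  from continuous_at_avoid[OF analytic_at_imp_isCont[OF assms(1)] assms(2)]
  obtain r2 where r2: "r2 > 0" "\<forall>w. dist z w < r2 \<longrightarrow> f w \<noteq> 0" by blast
  show ?thesis
  proof (rule that[of "min r1 r2"])
    show "f holomorphic_on ball z (min r1 r2)" by (rule holomorphic_on_subset[OF r1(2)]) auto
  qed (use r1 r2 in auto)
qed

lemma phase_period_multiplier:
  assumes f: "f nicely_meromorphic_on UNIV" and nonconst: "\<not> (\<exists>c. \<forall>z. f z = c)"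
      and period: "is_phase_period f p"
  obtains c :: real where "c > 0" "\<And>z. f (z + p) = of_real c * f z"
proof -
  define fp where "fp = (\<lambda>z. f (z + p))"
  have fp: "fp nicely_meromorphic_on UNIV" unfolding fp_def by (rule nicely_meromorphic_on_shift[OF f])
  have "\<not> (\<exists>c. \<forall>z. fp z = c)"
  proof
    assume "\<exists>c. \<forall>z. fp z = c"
    then obtain c where c: "\<And>z. f (z + p) = c" by (auto simp: fp_def)
    have "f z = c" for z using c[of "z - p"] by simp
    with nonconst show False by blast
  qed
  hence "\<forall>\<^sub>\<approx>z. f z \<noteq> 0" "\<forall>\<^sub>\<approx>z. fp z \<noteq> 0"
    using nicely_meromorphic_imp_constant_or_avoid[OF f open_UNIV connected_UNIV, of 0] nonconst
          nicely_meromorphic_imp_constant_or_avoid[OF fp open_UNIV connected_UNIV, of 0] by auto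
  moreover have "\<forall>\<^sub>\<approx>z. f analytic_on {z}" "\<forall>\<^sub>\<approx>z. fp analytic_on {z}"
    using f fp by (simp_all add: meromorphic_on_imp_analytic_cosparse nicely_meromorphic_on_def)
  ultimately have "\<forall>\<^sub>\<approx>z. f z \<noteq> 0 \<and> fp z \<noteq> 0 \<and> f analytic_on {z} \<and> fp analytic_on {z}"
    by eventually_elim auto
  then obtain z0 where z0: "f z0 \<noteq> 0" "fp z0 \<noteq> 0" "f analytic_on {z0}" "fp analytic_on {z0}"
    using eventually_happens'[of "cosparse (UNIV :: complex set)"] by auto
  obtain r1 where r1: "r1 > 0" "f holomorphic_on ball z0 r1" "\<And>w. w \<in> ball z0 r1 \<Longrightarrow> f w \<noteq> 0"
    using analytic_at_nonzero_ball[OF z0(3,1)] by blast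
  obtain r2 where r2: "r2 > 0" "fp holomorphic_on ball z0 r2" "\<And>w. w \<in> ball z0 r2 \<Longrightarrow> fp w \<noteq> 0"
    using analytic_at_nonzero_ball[OF z0(4,2)] by blast
  define U where "U = ball z0 (min r1 r2)"
  have U: "open U" "connected U" "z0 \<in> U" using r1 r2 by (auto simp: U_def)
  have hol: "f holomorphic_on U" "fp holomorphic_on U"
    using r1(2) r2(2) by (auto simp: U_def intro: holomorphic_on_subset)
  have nonzero: "f z \<noteq> 0" "fp z \<noteq> 0" if "z \<in> U" for z
    using r1(3) r2(3) that by (auto simp: U_def)
  have real: "fp z / f z = of_real (norm (fp z) / norm (f z))" if "z \<in> U" for z
  proof -
    have "\<not> is_pole f z" "\<not> is_pole fp z"
      using hol U(1) that by (auto intro!: analytic_at_imp_no_pole simp: analytic_on_open[symmetric]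
                                    intro: analytic_on_subset)
    thus ?thesis
      using phase_period_quotient_real[OF period] nonzero[OF that]
      by (simp add: fp_def is_pole_shift_iff')
  qed
  have "(\<lambda>z. fp z / f z) holomorphic_on U" using hol nonzero by (intro holomorphic_intros) auto
  moreover have "(\<lambda>z. fp z / f z) ` U \<subseteq> \<real>" using real by auto
  ultimately have "(\<lambda>z. fp z / f z) constant_on U"
    using U by (intro real_valued_holomorphic_imp_constant) auto
  then obtain k where k: "\<And>z. z \<in> U \<Longrightarrow> fp z / f z = k" by (auto simp: constant_on_def)
  define c where "c = norm (fp z0) / norm (f z0)"
  have "c > 0" using z0 by (simp add: c_def)
  have on_U: "fp z = of_real c * f z" if "z \<in> U" for z
    using k[OF that] k[OF U(3)] real[OF U(3)] nonzero[OF that] by (simp add: c_def field_simps)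
  have "fp z = of_real c * f z" for z
    by (rule nicely_meromorphic_eq_if_eq_on_open[OF fp nicely_meromorphic_on_cmult_left[OF f] U(1,3) on_U])
  with \<open>c > 0\<close> that show ?thesis by (simp add: fp_def)
qed

section \<open>The factorization\<close>

lemma quasi_periodic_quotient_periodic:
  fixes f s :: "complex \<Rightarrow> complex"
  assumes f: "\<And>z. f (z + p) = c * f z"
      and s: "\<And>w. s (w + p) = K * exp (e * w) * s w" and K: "K \<noteq> 0"
      and c: "exp (a * p + e * \<xi>) = c"
  shows "f (z + p) * exp (- (a * (z + p))) * s (- \<xi> + (z + p)) / s (z + p)
           = f z * exp (- (a * z)) * s (- \<xi> + z) / s z"
proof (cases "s z = 0")
  case False
  have exps: "c * exp (- (a * (z + p))) * exp (e * (- \<xi> + z)) = exp (- (a * z)) * exp (e * z)"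
  proof -
    have "a * p + e * \<xi> + - (a * (z + p)) + e * (- \<xi> + z) = - (a * z) + e * z"
      by (simp add: algebra_simps)
    thus ?thesis unfolding c[symmetric] by (simp flip: exp_add)
  qed
  have "f (z + p) * exp (- (a * (z + p))) * s (- \<xi> + (z + p)) / s (z + p)
          = K * (f z * (c * exp (- (a * (z + p))) * exp (e * (- \<xi> + z))) * s (- \<xi> + z))
            / (K * (exp (e * z) * s z))"
  proof -
    have "s (- \<xi> + (z + p)) = K * exp (e * (- \<xi> + z)) * s (- \<xi> + z)"
      using s[of "- \<xi> + z"] by (simp only: add.assoc)
    thus ?thesis unfolding f s[of z] by (simp only: mult_ac)
  qed
  also have "\<dots> = f z * (exp (- (a * z)) * exp (e * z)) * s (- \<xi> + z) / (exp (e * z) * s z)"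
    unfolding exps using K by (rule mult_divide_mult_cancel_left)
  also have "\<dots> = f z * exp (- (a * z)) * s (- \<xi> + z) / s z"
    by (simp add: mult_ac)
  finally show ?thesis .
qed (simp add: s)

lemma entire_nonzero_cosparse:
  assumes "f holomorphic_on UNIV" "f z0 \<noteq> 0"
  shows "\<forall>\<^sub>\<approx>z. f z \<noteq> 0"
proof -
  have "f meromorphic_on UNIV"
    using assms(1) by (simp add: analytic_on_open[symmetric] analytic_on_imp_meromorphic_on)
  hence "(\<forall>\<^sub>\<approx>z. f z = 0) \<or> (\<forall>\<^sub>\<approx>z. f z \<noteq> 0)"
    by (rule meromorphic_imp_constant_or_avoid) auto
  moreover have "\<not> (\<forall>\<^sub>\<approx>z. f z = 0)"
  proof
    assume "\<forall>\<^sub>\<approx>z. f z = 0"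
    hence "f \<midarrow>z0\<rightarrow> 0" by (intro tendsto_eventually) (simp add: eventually_cosparse_open_eq)
    moreover have "f \<midarrow>z0\<rightarrow> f z0"
      using assms(1) holomorphic_on_imp_continuous_on continuous_on_eq_continuous_at isCont_def
      by (metis open_UNIV UNIV_I)
    ultimately show False using assms(2) LIM_unique by blast
  qed
  ultimately show ?thesis by blast
qed

context complex_lattice
begin

lemma exists_exponent_and_shift:
  "\<exists>a \<xi>. a * p1 + weierstrass_eta p1 * \<xi> = l1 \<and> a * p2 + weierstrass_eta p2 * \<xi> = l2"
proof -
  define D where "D = p1 * weierstrass_eta p2 - p2 * weierstrass_eta p1"
  have "D \<noteq> 0" using legendre_nondegenerate by (simp add: D_def)
  define a where "a = (l1 * weierstrass_eta p2 - l2 * weierstrass_eta p1) / D"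
  define \<xi> where "\<xi> = (p1 * l2 - p2 * l1) / D"
  have "a * p1 + weierstrass_eta p1 * \<xi>
          = ((l1 * weierstrass_eta p2 - l2 * weierstrass_eta p1) * p1 + weierstrass_eta p1 * (p1 * l2 - p2 * l1)) / D"
       "a * p2 + weierstrass_eta p2 * \<xi>
          = ((l1 * weierstrass_eta p2 - l2 * weierstrass_eta p1) * p2 + weierstrass_eta p2 * (p1 * l2 - p2 * l1)) / D"
    by (simp_all add: a_def \<xi>_def add_divide_distrib)
  moreover have "(l1 * weierstrass_eta p2 - l2 * weierstrass_eta p1) * p1 + weierstrass_eta p1 * (p1 * l2 - p2 * l1)
               = l1 * D"
    by (simp add: D_def algebra_simps)
  moreover have "(l1 * weierstrass_eta p2 - l2 * weierstrass_eta p1) * p2 + weierstrass_eta p2 * (p1 * l2 - p2 * l1)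
               = l2 * D"
    by (simp add: D_def algebra_simps)
  ultimately show ?thesis using \<open>D \<noteq> 0\<close> by auto
qed

lemma meromorphic_factorization:
  assumes f: "f meromorphic_on UNIV"
      and c: "c1 > 0" "\<And>z. f (z + p1) = of_real c1 * f z" "c2 > 0" "\<And>z. f (z + p2) = of_real c2 * f z"
  obtains g \<xi> a where "elliptic g p1 p2"
    "\<forall>\<^sub>\<approx>z. f z = exp (a * z) * g z * \<sigma> z / \<sigma> (- \<xi> + z)"
    "a * p1 = of_real (ln c1) - \<xi> * weierstrass_eta p1" "a * p2 = of_real (ln c2) - \<xi> * weierstrass_eta p2"
proof -
  obtain a \<xi> where a\<xi>: "a * p1 + weierstrass_eta p1 * \<xi> = of_real (ln c1)"
                        "a * p2 + weierstrass_eta p2 * \<xi> = of_real (ln c2)"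
    using exists_exponent_and_shift by blast
  define g where "g = (\<lambda>z. f z * exp (- (a * z)) * \<sigma> (- \<xi> + z) / \<sigma> z)"
  have periodic: "g (z + p) = g z"
    if p: "p \<in> L" and mult: "\<And>z. f (z + p) = of_real c * f z" and "c > 0"
      and exponent: "a * p + weierstrass_eta p * \<xi> = of_real (ln c)" for p c z
  proof -
    obtain K where K: "K \<noteq> 0" "\<And>w. \<sigma> (w + p) = K * exp (weierstrass_eta p * w) * \<sigma> w"
      using sigma_quasi_periodic[OF p] by blast
    have "exp (a * p + weierstrass_eta p * \<xi>) = of_real c"
      using \<open>c > 0\<close> exponent by (simp add: exp_of_real)
    thus ?thesis
      unfolding g_def by (rule quasi_periodic_quotient_periodic[where f = f and s = \<sigma>, OF mult K(2,1)])
  qed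
  have shifted: "(\<lambda>z. \<sigma> (- \<xi> + z)) holomorphic_on UNIV"
    using holomorphic_sigma_shift[of "- \<xi>" UNIV] by (simp add: add.commute)
  hence "\<sigma> analytic_on UNIV" "(\<lambda>z. \<sigma> (- \<xi> + z)) analytic_on UNIV"
    using holomorphic_sigma by (simp_all add: analytic_on_open)
  hence "g meromorphic_on UNIV"
    unfolding g_def by (intro meromorphic_intros f analytic_on_imp_meromorphic_on analytic_intros)
  hence "elliptic g p1 p2"
    unfolding elliptic_def using periodic[OF p1_in_lattice c(2,1) a\<xi>(1)] periodic[OF p2_in_lattice c(4,3) a\<xi>(2)]
    by blast
  moreover have "\<forall>\<^sub>\<approx>z. f z = exp (a * z) * g z * \<sigma> z / \<sigma> (- \<xi> + z)"
  proof -
    obtain z0 where z0: "\<sigma> z0 \<noteq> 0" using sigma_nonzero_somewhere by blast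
    have "\<forall>\<^sub>\<approx>z. \<sigma> z \<noteq> 0" by (rule entire_nonzero_cosparse[OF holomorphic_sigma z0])
    moreover have "\<forall>\<^sub>\<approx>z. \<sigma> (- \<xi> + z) \<noteq> 0"
      by (rule entire_nonzero_cosparse[OF shifted, of "\<xi> + z0"]) (use z0 in simp)
    ultimately show ?thesis
      by eventually_elim (simp add: g_def exp_minus field_simps)
  qed
  moreover have "a * p1 = of_real (ln c1) - \<xi> * weierstrass_eta p1"
                "a * p2 = of_real (ln c2) - \<xi> * weierstrass_eta p2"
    using a\<xi> by (simp_all add: algebra_simps)
  ultimately show ?thesis using that by blast
qed

end

theorem mainTheorem2:
  fixes f :: "complex \<Rightarrow> complex" and p1 p2 :: complex
  assumes "f nicely_meromorphic_on UNIV"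
    and "\<not> (\<exists>c. \<forall>z. f z = c)"
    and "phase_doubly_periodic f p1 p2"
  shows "\<exists>g \<xi>0 a (m1::int) (m2::int).
           elliptic g p1 p2 \<and>
           (\<forall>\<^sub>\<approx>z. f z = exp (a * z) * g z * weierstrass_sigma (lattice p1 p2) z
                              / weierstrass_sigma (lattice p1 p2) (- \<xi>0 + z)) \<and>
           Im (a * p1) = Im (v_term (lattice p1 p2) \<xi>0 p1) + 2 * of_int m1 * pi \<and>
           Im (a * p2) = Im (v_term (lattice p1 p2) \<xi>0 p2) + 2 * of_int m2 * pi"
proof -
  interpret complex_lattice p1 p2
    using assms(3) by unfold_locales (simp add: phase_doubly_periodic_def)
  have "is_phase_period f p1" "is_phase_period f p2"
    using assms(3) by (auto simp: phase_doubly_periodic_def)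
  from phase_period_multiplier[OF assms(1,2) this(1)] phase_period_multiplier[OF assms(1,2) this(2)]
  obtain c1 c2 where c: "c1 > 0" "\<And>z. f (z + p1) = of_real c1 * f z"
                        "c2 > 0" "\<And>z. f (z + p2) = of_real c2 * f z"
    by metis
  have "f meromorphic_on UNIV" using assms(1) by (simp add: nicely_meromorphic_on_def)
  then obtain g \<xi> a where g: "elliptic g p1 p2" "\<forall>\<^sub>\<approx>z. f z = exp (a * z) * g z * \<sigma> z / \<sigma> (- \<xi> + z)"
      and a: "a * p1 = of_real (ln c1) - \<xi> * weierstrass_eta p1"
             "a * p2 = of_real (ln c2) - \<xi> * weierstrass_eta p2"
    by (rule meromorphic_factorization[OF _ c])
  have "Im (a * p1) = Im (v_term L \<xi> p1) + 2 * of_int (0::int) * pi"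
       "Im (a * p2) = Im (v_term L \<xi> p2) + 2 * of_int (0::int) * pi"
    using a by (simp_all add: v_term_eq)
  with g show ?thesis by (intro exI[of _ g] exI[of _ \<xi>] exI[of _ a] exI[of _ "0::int"] conjI)
qed

end
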